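(* Let $m,n$ be integers. Then $\Sigma_{m,n-2}\Sigma_{mn}=0$ and $\Sigma_{m,n-4}W_{mn}=W_{m,n-2}\Sigma_{mn}$ as maps from $\bar{\mathcal F}_{mn}$, where $\Sigma_{mn}=S_{m-n+1}$ and $W_{mn}=\sum_{k\ge1}F^n_kS_{m-n+3-k}S_{m-n+1+k}$ denote the operators defined on $\bar{\mathcal F}_{mn}$.
   Context: Fix a generic real $r$, $q=e^{-i\pi r}$. Heisenberg algebra: $\hat a$, $d/da$, $d^\pm_k$ ($k\ne0$) with $[d/da,\hat a]=1$, $[d^\pm_k,d^\pm_l]=[d^\pm_k,\hat a]=[d^\pm_k,d/da]=0$, $[d^\pm_k,d^\mp_l]=kA^\pm_k\delta_{k+l,0}$, $A^\pm_k=(\pm1)^k(q^{k/2}-q^{-k/2})(q^{k/2}-(-1)^kq^{-k/2})$. Ket vacuum $|1\rangle_a$: $\hat a|1\rangle_a=a|1\rangle_a$, $d^\pm_k|1\rangle_a=0$ ($k>0$); $\bar{\mathcal F}_a$ = span of monomials in $d^\pm_{-k}$ ($k>0$) applied to $|1\rangle_a$. $\delta=e^{(1-r)d/da}$ acts by $\delta P|1\rangle_a=P|1\rangle_{a+r-1}$. $a_{mn}=\frac r2m+\frac{1-r}2n$, $\bar{\mathcal F}_{mn}=\bar{\mathcal F}_{a_{mn}}$. Screening current $S(z)=\delta\,{:}\exp\sum_{k\ne0}\frac{d^-_k-d^+_k}{k(q^{k/2}-q^{-k/2})}z^{-k}{:}=\sum_kS_kz^{-k}$ (normal ordering places $d^\pm_k$,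 $k>0$, to the right); $S_k$ maps $\bar{\mathcal F}_{mn}$ to $\bar{\mathcal F}_{m,n-2}$. $F^n_k=(-1)^{k-1}\frac{q^{k/2}-(-1)^nq^{-k/2}}{q^{k/2}+(-1)^nq^{-k/2}}$; the sum defining $W_{mn}$ is finite on each vector. *)

theory Defs
  imports "HOL-Analysis.Analysis" "HOL-Library.Poly_Mapping"
begin

text \<open>A monomial in the creation operators
  d^+_{-k}, d^-_{-k} (k > 0) is a finitely supported exponent map
  M :: (bool \<times> nat) \<Rightarrow>0 nat, where (True,k) stands for d^+_{-k} and (False,k) for d^-_{-k}.
  A vector of the direct sum of all Fock modules is a coefficient function on pairs
  (a, M), meaning the sum of v(a,M) times the monomial M applied to the vacuum of charge a.\<close>

type_synonym mono = "(bool \<times> nat) \<Rightarrow>\<^sub>0 nat"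
type_synonym fvec = "real \<times> mono \<Rightarrow> complex"

text \<open>q^(k/2) with q = exp(-i pi r)\<close>
definition hq :: "real \<Rightarrow> int \<Rightarrow> complex" where
  "hq r k = exp (- \<i> * of_real (pi * r * of_int k / 2))"

definition sgnpow :: "int \<Rightarrow> complex" where
  "sgnpow k = (-1) ^ nat \<bar>k\<bar>"

text \<open>A^{\<plusminus>}_k; the sign True means +, False means -.\<close>
definition Acoef :: "real \<Rightarrow> bool \<Rightarrow> int \<Rightarrow> complex" where
  "Acoef r s k = (if s then 1 else sgnpow k) * (hq r k - hq r (-k)) * (hq r k - sgnpow k * hq r (-k))"

definition Fock :: "real \<Rightarrow> fvec set" where
  "Fock a = {v. finite {x. v x \<noteq> 0} \<and>
      (\<forall>b M. v (b, M) \<noteq> 0 \<longrightarrow> b = a \<and> (\<forall>i\<in>Poly_Mapping.keys M. 0 < snd i))}"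

text \<open>Heisenberg generators d^s_k (k \<noteq> 0): for k < 0 creation (multiplication by the
  variable (s,-k)); for k > 0 annihilation, k A^s_k times the derivative in the variable
  (not s, k), so that [d^s_k, d^{not s}_{-k}] = k A^s_k and all other commutators vanish.\<close>
definition dop :: "real \<Rightarrow> bool \<Rightarrow> int \<Rightarrow> fvec \<Rightarrow> fvec" where
  "dop r s k v = (\<lambda>(b, M).
     if k < 0 then
       (if 0 < Poly_Mapping.lookup M (s, nat (-k)) then v (b, M - Poly_Mapping.single (s, nat (-k)) 1) else 0)
     else if 0 < k then
       of_int k * Acoef r s k * of_nat (Poly_Mapping.lookup M (\<not> s, nat k) + 1)
         * v (b, M + Poly_Mapping.single (\<not> s, nat k) 1)
     else 0)"

text \<open>delta = exp((1-r) d/da): delta P|1>_a = P|1>_{a+r-1}\<close>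
definition delta :: "real \<Rightarrow> fvec \<Rightarrow> fvec" where
  "delta r v = (\<lambda>(b, M). v (b - (r - 1), M))"

text \<open>The mode (d^-_k - d^+_k) / (k (q^{k/2} - q^{-k/2})) of the exponent of S(z).\<close>
definition cop :: "real \<Rightarrow> int \<Rightarrow> fvec \<Rightarrow> fvec" where
  "cop r k v = (\<lambda>x. (dop r False k v x - dop r True k v x) / (of_int k * (hq r k - hq r (-k))))"

definition comps :: "nat \<Rightarrow> nat list set" where
  "comps n = {ks. (\<forall>k\<in>set ks. 0 < k) \<and> sum_list ks = n}"

text \<open>Coefficient of w^n in exp(sum_{k>0} T_k w^k) for operators T_k, applied to v:
  sum_j 1/j! sum_{k_1+...+k_j = n} T_{k_1} ... T_{k_j} v.\<close>
definition expcoef :: "(nat \<Rightarrow> fvec \<Rightarrow> fvec) \<Rightarrow> nat \<Rightarrow> fvec \<Rightarrow> fvec" where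
  "expcoef T n v = (\<lambda>x. \<Sum>ks\<in>comps n. (foldr T ks v) x / of_nat (fact (length ks)))"

text \<open>S_j, the coefficient of z^{-j} in S(z) = delta :exp(...): (annihilation part to the right).\<close>
definition Sop :: "real \<Rightarrow> int \<Rightarrow> fvec \<Rightarrow> fvec" where
  "Sop r j v = delta r (\<lambda>x. infsum (\<lambda>p.
       expcoef (\<lambda>k. cop r (- int k)) p (expcoef (\<lambda>k. cop r (int k)) (nat (int p + j)) v) x)
     {p. 0 \<le> int p + j})"

definition amn :: "real \<Rightarrow> int \<Rightarrow> int \<Rightarrow> real" where
  "amn r m n = r / 2 * of_int m + (1 - r) / 2 * of_int n"

definition Fcoef :: "real \<Rightarrow> int \<Rightarrow> nat \<Rightarrow> complex" where
  "Fcoef r n k = (-1) ^ (k - 1) * (hq r (int k) - sgnpow n * hq r (- int k))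
                   / (hq r (int k) + sgnpow n * hq r (- int k))"

definition Sigma_op :: "real \<Rightarrow> int \<Rightarrow> int \<Rightarrow> fvec \<Rightarrow> fvec" where
  "Sigma_op r m n = Sop r (m - n + 1)"

definition W_op :: "real \<Rightarrow> int \<Rightarrow> int \<Rightarrow> fvec \<Rightarrow> fvec" where
  "W_op r m n v = (\<lambda>x. infsum (\<lambda>k. Fcoef r n k *
       Sop r (m - n + 3 - int k) (Sop r (m - n + 1 + int k) v) x) {1..})"

end

theory Submission
  imports Defs
begin

text \<open>Write \<open>S_j = \<delta> (\<Sum>p. B_p A_{p+j})\<close>, where \<open>B_p\<close> and \<open>A_n\<close> are the coefficients of the
  creation and annihilation exponentials of the screening current. The Heisenberg relations make
  the mode \<open>k\<close> of the annihilation exponent and the mode \<open>-k\<close> of the creation exponent commute up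
  to the scalar \<open>-2/k\<close> for even \<open>k\<close> and \<open>0\<close> for odd \<open>k\<close> (this uses that \<open>r\<close> is irrational), and
  from this one gets the exchange relation \<open>A_n B_m = B_m A_n - B_{m-2} A_{n-2}\<close> for \<open>n, m \<ge> 2\<close>.
  Expanding \<open>S_a S_b\<close> with it gives \<open>\<delta>^2 (T(a,b) - T(a-2,b+2))\<close> for a double sum \<open>T\<close> that
  is symmetric in its two indices, hence \<open>S_a S_b = - S_{b+2} S_{a-2}\<close>. With \<open>a = b + 2\<close> this
  says \<open>\<Sigma>_{m,n-2} \<Sigma>_{mn} = 0\<close>, and applying it twice to every summand of \<open>W_{mn}\<close> gives the
  intertwining relation. All sums involved are finite because each mode shifts the degree of a
  monomial by a fixed amount.\<close>

section \<open>Linear operators\<close>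

definition linop :: "(('a \<Rightarrow> 'c::comm_ring_1) \<Rightarrow> 'b \<Rightarrow> 'c) \<Rightarrow> bool" where
  "linop f \<longleftrightarrow> (\<forall>u w. f (\<lambda>x. u x + w x) = (\<lambda>x. f u x + f w x)) \<and>
               (\<forall>c u. f (\<lambda>x. c * u x) = (\<lambda>x. c * f u x))"

lemma linop_add: "linop f \<Longrightarrow> f (\<lambda>x. u x + w x) = (\<lambda>x. f u x + f w x)"
  unfolding linop_def by blast

lemma linop_scale: "linop f \<Longrightarrow> f (\<lambda>x. c * u x) = (\<lambda>x. c * f u x)"
  unfolding linop_def by blast

lemma linop_zero: "linop f \<Longrightarrow> f (\<lambda>_. 0) = (\<lambda>_. 0)"
  using linop_scale[of f 0 "\<lambda>_. 0"] by simp

lemma linop_sum: "linop f \<Longrightarrow> f (\<lambda>x. \<Sum>i\<in>I. g i x) = (\<lambda>x. \<Sum>i\<in>I. f (g i) x)"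
proof (induction I rule: infinite_finite_induct)
  case (infinite A) then show ?case by (simp add: linop_zero)
next
  case empty then show ?case by (simp add: linop_zero)
next
  case (insert i F)
  have "f (\<lambda>x. \<Sum>i\<in>insert i F. g i x) = f (\<lambda>x. g i x + (\<Sum>i\<in>F. g i x))"
    using insert by simp
  also have "\<dots> = (\<lambda>x. f (g i) x + f (\<lambda>x. \<Sum>i\<in>F. g i x) x)"
    using linop_add[OF insert(4)] by metis
  finally show ?case using insert by simp
qed

lemma linop_neg: "linop f \<Longrightarrow> f (\<lambda>x. - u x) = (\<lambda>x. - f u x)"
  using linop_scale[of f "-1" u] by simp

lemma linop_diff: "linop f \<Longrightarrow> f (\<lambda>x. u x - w x) = (\<lambda>x. f u x - f w x)"
proof -
  assume l: "linop f"
  have "f (\<lambda>x. u x - w x) = f (\<lambda>x. u x + (\<lambda>x. - w x) x)" by simp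
  also have "\<dots> = (\<lambda>x. f u x + f (\<lambda>x. - w x) x)" by (rule linop_add[OF l])
  finally show ?thesis using linop_neg[OF l] by simp
qed

lemma linop_sum_scale: "linop f \<Longrightarrow> f (\<lambda>x. \<Sum>i\<in>I. c i * g i x) = (\<lambda>x. \<Sum>i\<in>I. c i * f (g i) x)"
proof -
  assume l: "linop f"
  have "f (\<lambda>x. \<Sum>i\<in>I. c i * g i x) = (\<lambda>x. \<Sum>i\<in>I. f (\<lambda>x. c i * g i x) x)"
    using linop_sum[OF l, of "\<lambda>i x. c i * g i x" I] by simp
  also have "\<dots> = (\<lambda>x. \<Sum>i\<in>I. c i * f (g i) x)"
    by (simp add: linop_scale[OF l])
  finally show ?thesis .
qed

lemma linop_comp: "linop f \<Longrightarrow> linop g \<Longrightarrow> linop (\<lambda>u. f (g u))"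
  unfolding linop_def by simp

lemma linop_foldr: "(\<And>k. linop (T k)) \<Longrightarrow> linop (foldr T ks)"
proof (induction ks)
  case Nil then show ?case by (simp add: linop_def)
next
  case (Cons k ks)
  have "linop (\<lambda>u. T k (foldr T ks u))" using linop_comp Cons by blast
  then show ?case by (simp add: o_def)
qed

section \<open>Coefficients of exponentials of commuting operators\<close>

lemma linop_expcoef: assumes "\<And>k. linop (T k)" shows "linop (expcoef T n)"
proof -
  have lf: "\<And>ks. linop (foldr T ks)" using linop_foldr assms by blast
  show ?thesis unfolding linop_def expcoef_def
  proof (intro conjI allI)
    fix u w :: fvec
    show "(\<lambda>x. \<Sum>ks\<in>comps n. foldr T ks (\<lambda>x. u x + w x) x / of_nat (fact (length ks))) =
          (\<lambda>x. (\<Sum>ks\<in>comps n. foldr T ks u x / of_nat (fact (length ks))) +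
               (\<Sum>ks\<in>comps n. foldr T ks w x / of_nat (fact (length ks))))"
      by (simp add: linop_add[OF lf] add_divide_distrib sum.distrib)
  next
    fix c u
    show "(\<lambda>x. \<Sum>ks\<in>comps n. foldr T ks (\<lambda>x. c * u x) x / of_nat (fact (length ks))) =
          (\<lambda>x. c * (\<Sum>ks\<in>comps n. foldr T ks u x / of_nat (fact (length ks))))"
      by (simp add: linop_scale[OF lf] sum_distrib_left)
  qed
qed

lemma length_le_sum_list_pos: "\<forall>k\<in>set ks. 0 < (k::nat) \<Longrightarrow> length ks \<le> sum_list ks"
  by (induction ks) auto

lemma finite_comps: "finite (comps n)"
proof -
  have "comps n \<subseteq> {xs. set xs \<subseteq> {0..n} \<and> length xs \<le> n}"
    unfolding comps_def using length_le_sum_list_pos member_le_sum_list by fastforce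
  then show ?thesis by (rule finite_subset) (rule finite_lists_length_le, simp)
qed

lemma comps_0: "comps 0 = {[]}"
proof -
  have "(\<forall>k\<in>set ks. 0<k) \<Longrightarrow> (\<forall>k\<in>set ks. k = (0::nat)) \<Longrightarrow> ks = []" for ks
    by (cases ks) auto
  then show ?thesis unfolding comps_def by auto
qed

lemma expcoef_0: "expcoef T 0 u = u" by (simp add: expcoef_def comps_0)

lemma foldr_commute: assumes "\<And>k l u. T k (T l u) = T l (T k u)"
  shows "foldr T xs (T x u) = T x (foldr T xs u)"
  by (induction xs) (simp_all add: assms)

lemma foldr_rotate1: assumes "\<And>k l u. T k (T l u) = T l (T k u)"
  shows "foldr T (rotate1 xs) u = foldr T xs u"
  by (cases xs) (simp_all add: foldr_commute[of T, OF assms])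

lemma foldr_rotate: assumes "\<And>k l u. T k (T l u) = T l (T k u)"
  shows "foldr T (rotate n xs) u = foldr T xs u"
  by (induction n) (simp_all add: foldr_rotate1[of T, OF assms])

lemma sum_list_rotate1: "sum_list (rotate1 xs) = sum_list (xs :: 'a::comm_monoid_add list)"
  by (cases xs) (simp_all add: add.commute)

lemma sum_list_rotate: "sum_list (rotate n xs) = sum_list (xs :: 'a::comm_monoid_add list)"
  by (induction n) (simp_all add: sum_list_rotate1)

lemma rotate_in_comps: "ks \<in> comps n \<Longrightarrow> rotate i ks \<in> comps n"
  unfolding comps_def by (simp add: sum_list_rotate)

lemma inj_rotate: "inj (rotate n)"
proof (induction n)
  case 0 then show ?case by simp
next
  case (Suc n)
  have "rotate (Suc n) = rotate1 \<circ> rotate n" by (rule ext) simp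
  then show ?case using inj_compose[OF inj_rotate1 Suc] by (simp add: comp_def)
qed

lemma bij_betw_Cons_comps:
  "bij_betw (\<lambda>(k, ks). k # ks) (SIGMA k:{1..n}. comps (n - k)) (comps n - {[]})"
proof (rule bij_betw_imageI)
  show "inj_on (\<lambda>(k, ks). k # ks) (SIGMA k:{1..n}. comps (n - k))"
    by (rule inj_onI) auto
  show "(\<lambda>(k, ks). k # ks) ` (SIGMA k:{1..n}. comps (n - k)) = comps n - {[]}"
  proof
    show "(\<lambda>(k, ks). k # ks) ` (SIGMA k:{1..n}. comps (n - k)) \<subseteq> comps n - {[]}"
      unfolding comps_def by auto
    show "comps n - {[]} \<subseteq> (\<lambda>(k, ks). k # ks) ` (SIGMA k:{1..n}. comps (n - k))"
    proof
      fix ks assume a: "ks \<in> comps n - {[]}"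
      then obtain k ks' where ks: "ks = k # ks'" by (cases ks) auto
      have "(k, ks') \<in> (SIGMA k:{1..n}. comps (n - k))"
        using a unfolding ks comps_def by auto
      then show "ks \<in> (\<lambda>(k, ks). k # ks) ` (SIGMA k:{1..n}. comps (n - k))"
        unfolding ks by force
    qed
  qed
qed

text \<open>Cyclic rotation of a composition preserves the summand, so each of the
  \<open>length ks\<close> parts may be moved to the front: weighting by the total \<open>sum_list ks\<close>
  is the same as weighting by \<open>length ks * hd ks\<close>.\<close>

lemma sum_comps_rotation_invariant:
  fixes f :: "nat list \<Rightarrow> 'a::comm_semiring_1"
  assumes frot: "\<And>i ks. f (rotate i ks) = f ks"
  shows "(\<Sum>ks\<in>comps n. of_nat (sum_list ks) * f ks) =
         (\<Sum>ks\<in>comps n. of_nat (length ks) * of_nat (hd ks) * f ks)"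
proof -
  define C where "C = comps n"
  define Sig where "Sig = (SIGMA ks:C. {..<length ks})"
  have finC: "finite C" unfolding C_def by (rule finite_comps)
  have finSig: "finite Sig" unfolding Sig_def using finC by auto
  define h where "h z = (rotate (snd z) (fst z), snd z)" for z :: "nat list \<times> nat"
  have "h ` Sig \<subseteq> Sig"
    unfolding h_def Sig_def C_def using rotate_in_comps by auto
  moreover have inj: "inj_on h Sig"
    by (rule inj_onI) (auto simp: h_def dest: injD[OF inj_rotate] simp: prod_eq_iff)
  ultimately have bij: "bij_betw h Sig Sig"
    unfolding bij_betw_def using endo_inj_surj[OF finSig] by blast
  have "(\<Sum>ks\<in>C. of_nat (sum_list ks) * f ks) = (\<Sum>z\<in>Sig. of_nat (fst z ! snd z) * f (fst z))"
    unfolding Sig_def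
    by (simp add: sum.Sigma[OF finC] split_def sum_list_sum_nth atLeast0LessThan sum_distrib_right)
  also have "\<dots> = (\<Sum>z\<in>Sig. of_nat (hd (fst (h z))) * f (fst (h z)))"
  proof (rule sum.cong)
    fix z assume "z \<in> Sig"
    then have "snd z < length (fst z)" unfolding Sig_def by auto
    then have "hd (rotate (snd z) (fst z)) = fst z ! snd z"
      by (subst hd_rotate_conv_nth) auto
    then show "of_nat (fst z ! snd z) * f (fst z) = of_nat (hd (fst (h z))) * f (fst (h z))"
      unfolding h_def by (simp add: frot)
  qed simp
  also have "\<dots> = (\<Sum>z\<in>Sig. of_nat (hd (fst z)) * f (fst z))"
    using sum.reindex_bij_betw[OF bij, of "\<lambda>z. of_nat (hd (fst z)) * f (fst z)"] by simp
  also have "\<dots> = (\<Sum>ks\<in>C. of_nat (length ks) * of_nat (hd ks) * f ks)"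
    unfolding Sig_def
    using sum.Sigma[OF finC, of "\<lambda>ks. {..<length ks}" "\<lambda>ks i. of_nat (hd ks) * f ks"]
    by (simp add: split_def mult.assoc)
  finally show ?thesis unfolding C_def .
qed

text \<open>The coefficients of \<open>exp (\<Sum>k. T k w^k)\<close> satisfy \<open>n E_n = \<Sum>k. k T_k E_{n-k}\<close>,
  the coefficient form of \<open>w d/dw exp F = (w F') exp F\<close>.\<close>

lemma expcoef_recurrence:
  assumes lin: "\<And>k. linop (T k)" and com: "\<And>k l u. T k (T l u) = T l (T k u)"
  shows "of_nat n * expcoef T n u x = (\<Sum>k\<in>{1..n}. of_nat k * T k (expcoef T (n - k) u) x)"
proof -
  define f where "f ks = foldr T ks u x / of_nat (fact (length ks))" for ks
  have frot: "f (rotate i ks) = f ks" for i ks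
    unfolding f_def using foldr_rotate[of T, OF com] by simp
  have "of_nat n * expcoef T n u x = (\<Sum>ks\<in>comps n. of_nat (sum_list ks) * f ks)"
    unfolding expcoef_def f_def sum_distrib_left
    by (rule sum.cong) (auto simp: comps_def)
  also have "\<dots> = (\<Sum>ks\<in>comps n - {[]}. of_nat (length ks) * of_nat (hd ks) * f ks)"
    unfolding sum_comps_rotation_invariant[OF frot]
    by (rule sum.mono_neutral_right[OF finite_comps]) auto
  also have "\<dots> = (\<Sum>(k, ks)\<in>(SIGMA k:{1..n}. comps (n - k)).
        of_nat (Suc (length ks)) * of_nat k * f (k # ks))"
    using sum.reindex_bij_betw[OF bij_betw_Cons_comps[of n],
        of "\<lambda>ks. of_nat (length ks) * of_nat (hd ks) * f ks"]
    by (simp add: split_def)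
  also have "\<dots> = (\<Sum>k\<in>{1..n}. \<Sum>ks\<in>comps (n - k).
        of_nat k * ((1 / of_nat (fact (length ks))) * T k (foldr T ks u) x))"
  proof -
    have "of_nat (Suc (length ks)) * of_nat k * f (k # ks) =
          of_nat k * ((1 / of_nat (fact (length ks))) * T k (foldr T ks u) x)" for k ks
    proof -
      have "f (k # ks) = T k (foldr T ks u) x / (of_nat (Suc (length ks)) * of_nat (fact (length ks)))"
        unfolding f_def by (simp only: foldr_Cons o_apply length_Cons fact_Suc of_nat_mult of_nat_id)
      moreover have "a \<noteq> 0 \<Longrightarrow> a * c * (X / (a * F)) = c * ((1 / F) * X)" for a c X F :: complex
        by (cases "F = 0") (simp_all add: field_simps)
      ultimately show ?thesis by (simp del: of_nat_Suc)
    qed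
    then show ?thesis by (simp add: sum.Sigma finite_comps split_def)
  qed
  also have "\<dots> = (\<Sum>k\<in>{1..n}. of_nat k * T k (expcoef T (n - k) u) x)"
  proof (rule sum.cong)
    fix k
    have "T k (expcoef T (n - k) u) =
          T k (\<lambda>x. \<Sum>ks\<in>comps (n - k). (1 / of_nat (fact (length ks))) * foldr T ks u x)"
      unfolding expcoef_def by simp
    also have "\<dots> = (\<lambda>x. \<Sum>ks\<in>comps (n - k). (1 / of_nat (fact (length ks))) * T k (foldr T ks u) x)"
      by (rule linop_sum_scale[OF lin])
    finally show "(\<Sum>ks\<in>comps (n - k). of_nat k * ((1 / of_nat (fact (length ks))) * T k (foldr T ks u) x))
        = of_nat k * T k (expcoef T (n - k) u) x"
      by (simp add: sum_distrib_left)
  qed simp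
  finally show ?thesis .
qed

lemma sum_triangle_swap:
  fixes p :: nat shows "(\<Sum>k\<in>{1..p}. \<Sum>l\<in>{1..p-k}. g k l) = (\<Sum>l\<in>{1..p}. \<Sum>k\<in>{1..p-l}. (g k l :: 'a::comm_monoid_add))"
proof -
  have e: "{l\<in>{1..p}. k + l \<le> p} = {1..p-k}" if "k \<ge> 1" for k::nat using that by auto
  have "(\<Sum>k\<in>{1..p}. \<Sum>l\<in>{1..p-k}. g k l) = (\<Sum>k\<in>{1..p}. \<Sum>l\<in>{l\<in>{1..p}. k + l \<le> p}. g k l)"
  proof (rule sum.cong)
    fix k assume "k \<in> {1..p}"
    then show "(\<Sum>l\<in>{1..p-k}. g k l) = (\<Sum>l\<in>{l\<in>{1..p}. k + l \<le> p}. g k l)" using e[of k] by simp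
  qed simp
  also have "\<dots> = (\<Sum>l\<in>{1..p}. \<Sum>k\<in>{k\<in>{1..p}. k + l \<le> p}. g k l)"
    by (rule sum.swap_restrict) auto
  also have "\<dots> = (\<Sum>l\<in>{1..p}. \<Sum>k\<in>{1..p-l}. g k l)"
  proof (rule sum.cong)
    fix l assume "l \<in> {1..p}"
    then have "{k\<in>{1..p}. k + l \<le> p} = {1..p-l}" by auto
    then show "(\<Sum>k\<in>{k\<in>{1..p}. k + l \<le> p}. g k l) = (\<Sum>k\<in>{1..p-l}. g k l)" by simp
  qed simp
  finally show ?thesis .
qed

lemma expcoef_triangle_sum:
  assumes lin: "\<And>k. linop (T k)" and com: "\<And>k l u. T k (T l u) = T l (T k u)"
  shows "(\<Sum>k\<in>{1..p}. \<Sum>l\<in>{1..p-k}. of_nat k * (c l * T k (expcoef T (p - k - l) u) x)) =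
         (\<Sum>l\<in>{1..p}. c l * (of_nat (p - l) * expcoef T (p - l) u x))"
proof -
  have "(\<Sum>k\<in>{1..p}. \<Sum>l\<in>{1..p-k}. of_nat k * (c l * T k (expcoef T (p - k - l) u) x)) =
        (\<Sum>l\<in>{1..p}. \<Sum>k\<in>{1..p-l}. of_nat k * (c l * T k (expcoef T (p - l - k) u) x))"
    using sum_triangle_swap[where p = p and g = "\<lambda>k l. of_nat k * (c l * T k (expcoef T (p - k - l) u) x)"]
    by (simp add: diff_commute add.commute)
  also have "\<dots> = (\<Sum>l\<in>{1..p}. c l * (of_nat (p - l) * expcoef T (p - l) u x))"
  proof (rule sum.cong[OF refl])
    fix l
    have "of_nat (p - l) * expcoef T (p - l) u x =
          (\<Sum>k\<in>{1..p-l}. of_nat k * T k (expcoef T (p - l - k) u) x)"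
      by (rule expcoef_recurrence[OF lin com])
    then show "(\<Sum>k\<in>{1..p-l}. of_nat k * (c l * T k (expcoef T (p - l - k) u) x)) =
               c l * (of_nat (p - l) * expcoef T (p - l) u x)"
      by (simp add: sum_distrib_left algebra_simps)
  qed
  finally show ?thesis .
qed

text \<open>If \<open>X\<close> commutes with each \<open>T l\<close> up to the scalar \<open>c l\<close>, then \<open>X\<close> commutes with the
  coefficients of \<open>exp (\<Sum>l. T l w^l)\<close> up to those of \<open>(\<Sum>l. c l w^l) exp (\<Sum>l. T l w^l)\<close>.\<close>

lemma expcoef_commutator:
  assumes lin: "\<And>k. linop (T k)" and com: "\<And>k l u. T k (T l u) = T l (T k u)"
    and linX: "linop X"
    and rel: "\<And>l u. X (T l u) = (\<lambda>x. T l (X u) x + c l * u x)"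
  shows "X (expcoef T p u) = (\<lambda>x. expcoef T p (X u) x + (\<Sum>l\<in>{1..p}. c l * expcoef T (p - l) u x))"
proof (induction p arbitrary: u rule: less_induct)
  case (less p)
  let ?E = "expcoef T"
  show ?case
  proof (cases "p = 0")
    case True then show ?thesis by (simp add: expcoef_0)
  next
    case False
    show ?thesis
    proof (rule ext)
      fix x
      have rec: "(\<lambda>y. of_nat n * ?E n w y) = (\<lambda>y. \<Sum>k\<in>{1..n}. of_nat k * T k (?E (n - k) w) y)" for n w
        using expcoef_recurrence[of T, OF lin com] by blast
      have step: "T k (X (?E (p - k) u)) x =
          T k (?E (p - k) (X u)) x + (\<Sum>l\<in>{1..p-k}. c l * T k (?E (p - k - l) u) x)"
        if "k \<in> {1..p}" for k
      proof -
        from that have "p - k < p" by auto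
        then have ih: "X (?E (p - k) u) = (\<lambda>x. ?E (p - k) (X u) x + (\<Sum>l\<in>{1..p-k}. c l * ?E (p - k - l) u x))"
          using less by blast
        show ?thesis unfolding ih linop_add[OF lin] linop_sum_scale[OF lin] by simp
      qed
      have "of_nat p * X (?E p u) x = X (\<lambda>y. \<Sum>k\<in>{1..p}. of_nat k * T k (?E (p - k) u) y) x"
        using linop_scale[OF linX, of "of_nat p" "?E p u"] rec[of p u] by simp
      also have "\<dots> = (\<Sum>k\<in>{1..p}. of_nat k * T k (X (?E (p - k) u)) x + of_nat k * (c k * ?E (p - k) u x))"
        by (simp add: linop_sum_scale[OF linX] rel algebra_simps)
      also have "\<dots> = (\<Sum>k\<in>{1..p}. of_nat k * T k (?E (p - k) (X u)) x)
            + (\<Sum>k\<in>{1..p}. \<Sum>l\<in>{1..p-k}. of_nat k * (c l * T k (?E (p - k - l) u) x))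
            + (\<Sum>k\<in>{1..p}. of_nat k * (c k * ?E (p - k) u x))"
        by (simp add: step sum.distrib distrib_left sum_distrib_left)
      also have "\<dots> = of_nat p * ?E p (X u) x
            + (\<Sum>l\<in>{1..p}. c l * (of_nat (p - l) * ?E (p - l) u x) + of_nat l * (c l * ?E (p - l) u x))"
        unfolding expcoef_triangle_sum[OF lin com] sum.distrib using fun_cong[OF rec[of p "X u"], of x] by simp
      also have "\<dots> = of_nat p * (?E p (X u) x + (\<Sum>l\<in>{1..p}. c l * ?E (p - l) u x))"
      proof -
        have "c l * (of_nat (p - l) * ?E (p - l) u x) + of_nat l * (c l * ?E (p - l) u x) =
              of_nat p * (c l * ?E (p - l) u x)" if "l \<in> {1..p}" for l
          using that by (simp add: of_nat_diff algebra_simps)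
        then show ?thesis by (simp add: distrib_left sum_distrib_left)
      qed
      finally show "X (?E p u) x = ?E p (X u) x + (\<Sum>l\<in>{1..p}. c l * ?E (p - l) u x)"
        using False by simp
    qed
  qed
qed

section \<open>Heisenberg relations\<close>

lemma lookup_single_if: "Poly_Mapping.lookup (Poly_Mapping.single v (n::nat)) w = (if v = w then n else 0)"
  by (cases "v = w") (auto simp: lookup_single_not_eq)

lemma lookup_add_single:
  "Poly_Mapping.lookup (M + Poly_Mapping.single v (n::nat)) w = Poly_Mapping.lookup M w + (if v = w then n else 0)"
  by (simp add: lookup_add lookup_single_if)

lemma lookup_minus_single:
  "Poly_Mapping.lookup (M - Poly_Mapping.single v (n::nat)) w = Poly_Mapping.lookup M w - (if v = w then n else 0)"
  by (simp add: lookup_minus lookup_single_if)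

lemma minus_add_single:
  "0 < Poly_Mapping.lookup M v \<Longrightarrow> M - Poly_Mapping.single v (1::nat) + Poly_Mapping.single v 1 = M"
  by (rule poly_mapping_eqI) (auto simp: lookup_add lookup_minus_single lookup_single_if)

lemma add_single_minus_single:
  "0 < Poly_Mapping.lookup M w \<Longrightarrow>
   M + Poly_Mapping.single v (1::nat) - Poly_Mapping.single w 1 = M - Poly_Mapping.single w 1 + Poly_Mapping.single v 1"
  by (rule poly_mapping_eqI) (auto simp: lookup_add lookup_minus_single lookup_single_if)

lemma linop_dop: "linop (dop r s k)"
  unfolding linop_def dop_def by (auto simp: fun_eq_iff algebra_simps)

lemma linop_cop: "linop (cop r k)"
  unfolding linop_def cop_def
  by (auto simp: fun_eq_iff linop_add[OF linop_dop] linop_scale[OF linop_dop] algebra_simps add_divide_distrib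
      diff_divide_distrib)

lemma linop_delta: "linop (delta r)"
  unfolding linop_def delta_def by (auto simp: fun_eq_iff)

lemma cop_0: "cop r 0 u = (\<lambda>_. 0)"
  unfolding cop_def dop_def by (simp add: fun_eq_iff)

lemma dop_delta: "dop r s k (delta r u) = delta r (dop r s k u)"
  unfolding dop_def delta_def by (simp add: fun_eq_iff)

lemma cop_delta: "cop r k (delta r u) = delta r (cop r k u)"
  unfolding cop_def by (simp add: dop_delta) (simp add: delta_def fun_eq_iff)

lemma dop_creation_apply: "k < 0 \<Longrightarrow> dop r s k u (b, M) =
   (if 0 < Poly_Mapping.lookup M (s, nat (-k)) then u (b, M - Poly_Mapping.single (s, nat (-k)) 1) else 0)"
  unfolding dop_def by simp

lemma dop_annihilation_apply: "0 < k \<Longrightarrow> dop r s k u (b, M) =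
   of_int k * Acoef r s k * of_nat (Poly_Mapping.lookup M (\<not> s, nat k) + 1)
         * u (b, M + Poly_Mapping.single (\<not> s, nat k) 1)"
  unfolding dop_def by simp

lemma dop_creation_commute: assumes "k < 0" "l < 0"
  shows "dop r s k (dop r s' l u) = dop r s' l (dop r s k u)"
proof (rule ext)
  fix x :: "real \<times> mono" obtain b M where x: "x = (b, M)" by (cases x)
  define v where "v = (s, nat (-k))"
  define w where "w = (s', nat (-l))"
  have L: "dop r s k (dop r s' l u) (b, M) = (if 0 < Poly_Mapping.lookup M v \<and> 0 < Poly_Mapping.lookup M w - (if v = w then 1 else 0)
     then u (b, M - Poly_Mapping.single v 1 - Poly_Mapping.single w 1) else 0)"
    using assms by (simp add: dop_creation_apply lookup_minus_single v_def w_def)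
  have R: "dop r s' l (dop r s k u) (b, M) = (if 0 < Poly_Mapping.lookup M w \<and> 0 < Poly_Mapping.lookup M v - (if w = v then 1 else 0)
     then u (b, M - Poly_Mapping.single w 1 - Poly_Mapping.single v 1) else 0)"
    using assms by (simp add: dop_creation_apply lookup_minus_single v_def w_def)
  have e: "M - Poly_Mapping.single v 1 - Poly_Mapping.single w 1 = M - Poly_Mapping.single w 1 - Poly_Mapping.single v (1::nat)"
    by (simp add: diff_diff_add add.commute)
  show "dop r s k (dop r s' l u) x = dop r s' l (dop r s k u) x"
    unfolding x L R e by (cases "v = w") auto
qed

lemma dop_annihilation_commute: assumes "0 < k" "0 < l"
  shows "dop r s k (dop r s' l u) = dop r s' l (dop r s k u)"
proof (rule ext)
  fix x :: "real \<times> mono" obtain b M where x: "x = (b, M)" by (cases x)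
  define v where "v = (\<not> s, nat k)"
  define w where "w = (\<not> s', nat l)"
  have L: "dop r s k (dop r s' l u) (b, M) = of_int k * Acoef r s k * of_nat (Poly_Mapping.lookup M v + 1) *
      (of_int l * Acoef r s' l * of_nat (Poly_Mapping.lookup M w + (if v = w then 1 else 0) + 1) *
       u (b, M + Poly_Mapping.single v 1 + Poly_Mapping.single w 1))"
    using assms by (simp add: dop_annihilation_apply lookup_add_single v_def w_def)
  have R: "dop r s' l (dop r s k u) (b, M) = of_int l * Acoef r s' l * of_nat (Poly_Mapping.lookup M w + 1) *
      (of_int k * Acoef r s k * of_nat (Poly_Mapping.lookup M v + (if w = v then 1 else 0) + 1) *
       u (b, M + Poly_Mapping.single w 1 + Poly_Mapping.single v 1))"
    using assms by (simp add: dop_annihilation_apply lookup_add_single v_def w_def)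
  have e: "M + Poly_Mapping.single v 1 + Poly_Mapping.single w 1 = M + Poly_Mapping.single w 1 + Poly_Mapping.single v (1::nat)"
    by (simp add: add_ac)
  show "dop r s k (dop r s' l u) x = dop r s' l (dop r s k u) x"
    unfolding x L R e by (cases "v = w") (simp_all add: mult_ac)
qed

lemma dop_commutator: assumes "0 < k" "l < 0"
  shows "dop r s k (dop r s' l u) =
     (\<lambda>x. dop r s' l (dop r s k u) x + (if s' = (\<not> s) \<and> l = - k then of_int k * Acoef r s k * u x else 0))"
proof (rule ext)
  fix x :: "real \<times> mono" obtain b M where x: "x = (b, M)" by (cases x)
  define v where "v = (\<not> s, nat k)"
  define w where "w = (s', nat (- l))"
  define c where "c = of_int k * Acoef r s k"
  have vw: "(v = w) = (s' = (\<not> s) \<and> l = - k)" unfolding v_def w_def using assms by auto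
  have L: "dop r s k (dop r s' l u) (b, M) = c * of_nat (Poly_Mapping.lookup M v + 1) *
     (if 0 < Poly_Mapping.lookup M w + (if v = w then 1 else 0) then u (b, M + Poly_Mapping.single v 1 - Poly_Mapping.single w 1) else 0)"
    using assms by (simp add: dop_annihilation_apply dop_creation_apply lookup_add_single v_def w_def c_def)
  have R: "dop r s' l (dop r s k u) (b, M) = (if 0 < Poly_Mapping.lookup M w then
      c * of_nat (Poly_Mapping.lookup M v - (if w = v then 1 else 0) + 1) * u (b, M - Poly_Mapping.single w 1 + Poly_Mapping.single v 1) else 0)"
    using assms by (simp add: dop_annihilation_apply dop_creation_apply lookup_minus_single v_def w_def c_def)
  show "dop r s k (dop r s' l u) x = dop r s' l (dop r s k u) x + (if s' = (\<not> s) \<and> l = - k then of_int k * Acoef r s k * u x else 0)"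
  proof (cases "v = w")
    case True
    then have t: "s' = (\<not> s) \<and> l = - k" using vw by simp
    have e1: "M + Poly_Mapping.single v 1 - Poly_Mapping.single w 1 = M" using True by simp
    show ?thesis
    proof (cases "Poly_Mapping.lookup M v = 0")
      case True
      then show ?thesis unfolding x L R e1 using t \<open>v = w\<close> by (simp add: c_def)
    next
      case False
      then have e2: "M - Poly_Mapping.single w 1 + Poly_Mapping.single v 1 = M"
        using minus_add_single[of M v] \<open>v = w\<close> by simp
      have e3: "of_nat (Poly_Mapping.lookup M v + 1) = (of_nat (Poly_Mapping.lookup M v - 1 + 1) :: complex) + 1"
        using False by simp
      show ?thesis unfolding x L R e1 e2 using t \<open>v = w\<close> False
        by (simp add: c_def e3 algebra_simps)
    qed
  next
    case False
    then have t: "\<not> (s' = (\<not> s) \<and> l = - k)" using vw by simp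
    show ?thesis unfolding x L R if_not_P[OF t] using False add_single_minus_single[of M w v]
      by simp
  qed
qed

definition cop_denom :: "real \<Rightarrow> int \<Rightarrow> complex" where
  "cop_denom r k = of_int k * (hq r k - hq r (-k))"

definition cop_bracket :: "real \<Rightarrow> int \<Rightarrow> complex" where
  "cop_bracket r k = - (of_int k * (Acoef r False k + Acoef r True k)) / (cop_denom r k * cop_denom r (-k))"

lemma cop_eq_scaled_diff: "cop r l u = (\<lambda>y. (1 / cop_denom r l) * (\<lambda>y. dop r False l u y - dop r True l u y) y)"
  unfolding cop_def cop_denom_def by (simp add: fun_eq_iff)

lemma dop_cop_expand: "dop r s k (cop r l u) = (\<lambda>y. (dop r s k (dop r False l u) y - dop r s k (dop r True l u) y) / cop_denom r l)"
proof -
  have "dop r s k (cop r l u) = (\<lambda>y. (1 / cop_denom r l) * dop r s k (\<lambda>y. dop r False l u y - dop r True l u y) y)"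
    unfolding cop_eq_scaled_diff by (rule linop_scale[OF linop_dop])
  also have "\<dots> = (\<lambda>y. (1 / cop_denom r l) * (dop r s k (dop r False l u) y - dop r s k (dop r True l u) y))"
    by (simp add: linop_diff[OF linop_dop])
  finally show ?thesis by simp
qed

lemma cop_cop_expand: "cop r k (cop r l u) x =
  (dop r False k (dop r False l u) x - dop r False k (dop r True l u) x
   - dop r True k (dop r False l u) x + dop r True k (dop r True l u) x) / (cop_denom r k * cop_denom r l)"
proof -
  have "((a - b) / y - (c - d) / y) / z = (a - b - c + d) / (z * y)" for a b c d y z :: complex
    by (cases "y = 0"; cases "z = 0") (simp_all add: field_simps)
  then show ?thesis
    unfolding cop_def[of r k] dop_cop_expand cop_denom_def[symmetric] by simp
qed

lemma cop_creation_commute: assumes "k < 0" "l < 0" shows "cop r k (cop r l u) = cop r l (cop r k u)"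
  by (rule ext) (simp add: cop_cop_expand dop_creation_commute[OF assms] algebra_simps)

lemma cop_annihilation_commute: assumes "0 < k" "0 < l" shows "cop r k (cop r l u) = cop r l (cop r k u)"
  by (rule ext) (simp add: cop_cop_expand dop_annihilation_commute[OF assms] algebra_simps)

lemma cop_commutator: assumes "0 < k" "l < 0"
  shows "cop r k (cop r l u) = (\<lambda>x. cop r l (cop r k u) x + (if l = - k then cop_bracket r k * u x else 0))"
proof (rule ext)
  fix x
  have "cop r k (cop r l u) x =
    (dop r False l (dop r False k u) x - (dop r True l (dop r False k u) x + (if l = - k then of_int k * Acoef r False k * u x else 0))
     - (dop r False l (dop r True k u) x + (if l = - k then of_int k * Acoef r True k * u x else 0))
     + dop r True l (dop r True k u) x) / (cop_denom r k * cop_denom r l)"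
    unfolding cop_cop_expand by (simp add: dop_commutator[OF assms])
  also have "\<dots> = cop r l (cop r k u) x + (if l = - k then cop_bracket r k * u x else 0)"
    unfolding cop_cop_expand cop_bracket_def
    by (cases "l = - k") (simp_all add: add_divide_distrib diff_divide_distrib algebra_simps)
  finally show "cop r k (cop r l u) x = cop r l (cop r k u) x + (if l = - k then cop_bracket r k * u x else 0)" .
qed

lemma hq_neq_inverse: assumes "r \<notin> \<rat>" "k \<noteq> 0" shows "hq r k \<noteq> hq r (-k)"
proof
  assume "hq r k = hq r (-k)"
  then obtain n :: int where n: "- \<i> * of_real (pi * r * of_int k / 2) =
      - \<i> * of_real (pi * r * of_int (-k) / 2) + of_int (2 * n) * pi * \<i>"
    unfolding hq_def exp_eq by blast
  have "Im (- \<i> * of_real (pi * r * of_int k / 2)) =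
      Im (- \<i> * of_real (pi * r * of_int (-k) / 2) + of_int (2 * n) * pi * \<i>)"
    using arg_cong[where f=Im, OF n] .
  then have "- (pi * r * of_int k / 2) = pi * r * of_int k / 2 + 2 * of_int n * pi" by simp
  then have "pi * r * of_int k + 2 * of_int n * pi = 0" by linarith
  then have "pi * (r * of_int k + 2 * of_int n) = 0" by (simp add: algebra_simps)
  then have "r * of_int k = - 2 * of_int n" by simp
  then have "r = (- 2 * of_int n) / of_int k" using assms(2) by (simp add: field_simps)
  then have "r \<in> \<rat>" by simp
  then show False using assms(1) by simp
qed

lemma cop_bracket_value: assumes "r \<notin> \<rat>" "0 < k"
  shows "of_int k * cop_bracket r k = (if even k then -2 else 0)"
proof -
  define h1 where "h1 = hq r k"
  define h2 where "h2 = hq r (-k)"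
  have ne: "h1 - h2 \<noteq> 0" using hq_neq_inverse[OF assms(1)] assms(2) unfolding h1_def h2_def by simp
  have DD: "cop_denom r k * cop_denom r (-k) = of_int k * of_int k * (h1 - h2) * (h1 - h2)"
    unfolding cop_denom_def h1_def h2_def by (simp add: algebra_simps)
  have kne: "(of_int k :: complex) \<noteq> 0" using assms by simp
  show ?thesis
  proof (cases "even k")
    case True
    then have sg: "sgnpow k = 1" unfolding sgnpow_def by (simp add: even_nat_iff)
    have aF: "Acoef r False k = (h1 - h2) * (h1 - h2)"
      unfolding Acoef_def sg h1_def h2_def by simp
    have aT: "Acoef r True k = (h1 - h2) * (h1 - h2)"
      unfolding Acoef_def sg h1_def h2_def by simp
    have "of_int k * cop_bracket r k = - (of_int k * of_int k * (h1 - h2) * (h1 - h2) * 2) / (of_int k * of_int k * (h1 - h2) * (h1 - h2))"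
      unfolding cop_bracket_def DD aF aT by (simp add: algebra_simps)
    also have "\<dots> = -2"
    proof -
      have X: "of_int k * of_int k * (h1 - h2) * (h1 - h2) \<noteq> (0::complex)" using ne kne by simp
      have g: "X \<noteq> 0 \<Longrightarrow> - (X * 2) / X = (-2::complex)" for X by (simp add: field_simps)
      show ?thesis by (rule g[OF X])
    qed
    finally show ?thesis using True by simp
  next
    case False
    then have sg: "sgnpow k = -1" unfolding sgnpow_def by (simp add: even_nat_iff)
    have "Acoef r False k + Acoef r True k = 0"
      unfolding Acoef_def sg by (simp add: algebra_simps)
    then show ?thesis using False unfolding cop_bracket_def by simp
  qed
qed

section \<open>The exchange relation\<close>

definition Bop :: "real \<Rightarrow> nat \<Rightarrow> fvec \<Rightarrow> fvec" where
  "Bop r p = expcoef (\<lambda>k. cop r (- int k)) p"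

definition Aop :: "real \<Rightarrow> nat \<Rightarrow> fvec \<Rightarrow> fvec" where
  "Aop r n = expcoef (\<lambda>k. cop r (int k)) n"

lemma cop_neg_commute: "cop r (- int k) (cop r (- int l) u) = cop r (- int l) (cop r (- int k) u)"
proof (cases "k = 0 \<or> l = 0")
  case True then show ?thesis by (auto simp: cop_0 linop_zero[OF linop_cop])
next
  case False then show ?thesis by (intro cop_creation_commute) auto
qed

lemma cop_pos_commute: "cop r (int k) (cop r (int l) u) = cop r (int l) (cop r (int k) u)"
proof (cases "k = 0 \<or> l = 0")
  case True then show ?thesis by (auto simp: cop_0 linop_zero[OF linop_cop])
next
  case False then show ?thesis by (intro cop_annihilation_commute) auto
qed

lemma linop_Bop: "linop (Bop r p)" unfolding Bop_def by (rule linop_expcoef[OF linop_cop])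
lemma linop_Aop: "linop (Aop r p)" unfolding Aop_def by (rule linop_expcoef[OF linop_cop])

lemma expcoef_commute:
  assumes lin: "\<And>k. linop (T k)" and com: "\<And>k l u. T k (T l u) = T l (T k u)"
    and linX: "linop X" and rel: "\<And>l u. X (T l u) = T l (X u)"
  shows "X (expcoef T p u) = expcoef T p (X u)"
  using expcoef_commutator[of T X "\<lambda>_. 0" p u, OF lin com linX] rel by simp

lemma cop_Bop_commute: "cop r (- int l) (Bop r p u) = Bop r p (cop r (- int l) u)"
  unfolding Bop_def
  by (rule expcoef_commute[where T="\<lambda>k. cop r (- int k)" and X="cop r (- int l)"],
      rule linop_cop, rule cop_neg_commute, rule linop_cop, rule cop_neg_commute)

lemma cop_Aop_commute: "cop r (int l) (Aop r p u) = Aop r p (cop r (int l) u)"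
  unfolding Aop_def
  by (rule expcoef_commute[where T="\<lambda>k. cop r (int k)" and X="cop r (int l)"],
      rule linop_cop, rule cop_pos_commute, rule linop_cop, rule cop_pos_commute)

lemma Bop_commute: "Bop r p (Bop r q u) = Bop r q (Bop r p u)"
  unfolding Bop_def[of r q]
  by (rule expcoef_commute[where T="\<lambda>k. cop r (- int k)" and X="Bop r p"],
      rule linop_cop, rule cop_neg_commute, rule linop_Bop, rule cop_Bop_commute[symmetric])

lemma Aop_commute: "Aop r p (Aop r q u) = Aop r q (Aop r p u)"
  unfolding Aop_def[of r q]
  by (rule expcoef_commute[where T="\<lambda>k. cop r (int k)" and X="Aop r p"],
      rule linop_cop, rule cop_pos_commute, rule linop_Aop, rule cop_Aop_commute[symmetric])

lemma delta_Bop: "delta r (Bop r p u) = Bop r p (delta r u)"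
  unfolding Bop_def
  by (rule expcoef_commute[where T="\<lambda>k. cop r (- int k)" and X="delta r"],
      rule linop_cop, rule cop_neg_commute, rule linop_delta, rule cop_delta[symmetric])

lemma delta_Aop: "delta r (Aop r p u) = Aop r p (delta r u)"
  unfolding Aop_def
  by (rule expcoef_commute[where T="\<lambda>k. cop r (int k)" and X="delta r"],
      rule linop_cop, rule cop_pos_commute, rule linop_delta, rule cop_delta[symmetric])

lemma Aop_0: "Aop r 0 u = u" unfolding Aop_def by (rule expcoef_0)

lemma Aop_recurrence: "of_nat n * Aop r n u x = (\<Sum>k\<in>{1..n}. of_nat k * cop r (int k) (Aop r (n - k) u) x)"
  unfolding Aop_def
  by (rule expcoef_recurrence[where T="\<lambda>k. cop r (int k)"], rule linop_cop, rule cop_pos_commute)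

lemma cop_Bop_commutator: assumes "1 \<le> K"
  shows "cop r (int K) (Bop r m u) = (\<lambda>x. Bop r m (cop r (int K) u) x + (if K \<le> m then cop_bracket r (int K) * Bop r (m - K) u x else 0))"
proof -
  define c where "c l = (if l = K then cop_bracket r (int K) else 0)" for l
  have rel: "cop r (int K) (cop r (- int l) u) = (\<lambda>x. cop r (- int l) (cop r (int K) u) x + c l * u x)" for l u
  proof (cases "l = 0")
    case True
    then have "c l = 0" using assms unfolding c_def by simp
    then show ?thesis using True by (simp add: cop_0 linop_zero[OF linop_cop])
  next
    case False
    then have "cop r (int K) (cop r (- int l) u) =
       (\<lambda>x. cop r (- int l) (cop r (int K) u) x + (if - int l = - int K then cop_bracket r (int K) * u x else 0))"
      using assms by (intro cop_commutator) auto
    then show ?thesis unfolding c_def by (auto simp: fun_eq_iff)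
  qed
  have "cop r (int K) (Bop r m u) = (\<lambda>x. Bop r m (cop r (int K) u) x + (\<Sum>l\<in>{1..m}. c l * Bop r (m - l) u x))"
    unfolding Bop_def
    by (rule expcoef_commutator[where T="\<lambda>k. cop r (- int k)" and X="cop r (int K)" and c=c],
        rule linop_cop, rule cop_neg_commute, rule linop_cop, rule rel)
  moreover have "(\<Sum>l\<in>{1..m}. c l * Bop r (m - l) u x) = (if K \<le> m then cop_bracket r (int K) * Bop r (m - K) u x else 0)" for x
  proof -
    have "(\<Sum>l\<in>{1..m}. c l * Bop r (m - l) u x) = (\<Sum>l\<in>{1..m}. if l = K then cop_bracket r (int K) * Bop r (m - l) u x else 0)"
      unfolding c_def by (rule sum.cong) auto
    also have "\<dots> = (if K \<in> {1..m} then cop_bracket r (int K) * Bop r (m - K) u x else 0)"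
      by simp
    finally show ?thesis using assms by simp
  qed
  ultimately show ?thesis by simp
qed

definition both_ge_2 :: "nat \<Rightarrow> nat \<Rightarrow> complex" where
  "both_ge_2 n m = (if 2 \<le> n \<and> 2 \<le> m then 1 else 0)"

lemma sum_even_weights_shift:
  fixes F :: "nat \<Rightarrow> complex"
  assumes phi: "\<And>k. 1 \<le> k \<Longrightarrow> \<phi> k = (if even k then -2 else 0)"
  shows "(\<Sum>k\<in>{1..M}. \<phi> k * F k) = (if 2 \<le> M then -2 * F 2 else 0) + (\<Sum>k\<in>{1..M-2}. \<phi> k * F (k+2))"
proof (cases "2 \<le> M")
  case False
  then have "M = 0 \<or> M = 1" by auto
  then show ?thesis using phi[of 1] by auto
next
  case True
  have "(\<Sum>k\<in>{1..M}. \<phi> k * F k) = \<phi> 1 * F 1 + (\<phi> 2 * F 2 + (\<Sum>k\<in>{3..M}. \<phi> k * F k))"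
    using True by (simp add: sum.atLeast_Suc_atMost numeral_3_eq_3 eval_nat_numeral)
  also have "(\<Sum>k\<in>{3..M}. \<phi> k * F k) = (\<Sum>k\<in>{1..M-2}. \<phi> (k+2) * F (k+2))"
  proof -
    have "{3..M} = {1+2..(M-2)+2}" using True by auto
    then show ?thesis by (simp only: sum.shift_bounds_cl_nat_ivl)
  qed
  also have "\<dots> = (\<Sum>k\<in>{1..M-2}. \<phi> k * F (k+2))"
    by (rule sum.cong) (auto simp: phi)
  finally show ?thesis using True phi[of 1] phi[of 2] by simp
qed

lemma sum_atLeastAtMost_if_le:
  fixes M n :: nat
  assumes "M \<le> n"
  shows "(\<Sum>k\<in>{1..n}. if k \<le> M then f k else 0) = (\<Sum>k\<in>{1..M}. f k)"
proof -
  have "{k\<in>{1..n}. k \<le> M} = {1..M}" using assms by (auto intro: order_trans)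
  then show ?thesis using sum.inter_filter[of "{1..n}" f "\<lambda>k. k \<le> M"] by simp
qed

lemma Bop_Aop_recurrence:
  "(\<Sum>k\<in>{1..n}. of_nat k * Bop r m (cop r (int k) (Aop r (n - k) u)) x) = of_nat n * Bop r m (Aop r n u) x"
proof -
  have "(\<Sum>k\<in>{1..n}. of_nat k * Bop r m (cop r (int k) (Aop r (n - k) u)) x) =
        Bop r m (\<lambda>y. \<Sum>k\<in>{1..n}. of_nat k * cop r (int k) (Aop r (n - k) u) y) x"
    by (simp add: linop_sum_scale[OF linop_Bop])
  also have "(\<lambda>y. \<Sum>k\<in>{1..n}. of_nat k * cop r (int k) (Aop r (n - k) u) y) = (\<lambda>y. of_nat n * Aop r n u y)"
    by (simp add: Aop_recurrence)
  finally show ?thesis by (simp add: linop_scale[OF linop_Bop])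
qed

lemma Bop_Aop_correction_sum:
  "(\<Sum>k\<in>{1..n}. (if 2 \<le> m \<and> k \<le> n - 2 then
       of_nat k * Bop r (m - 2) (cop r (int k) (Aop r (n - 2 - k) u)) x else 0))
   = both_ge_2 n m * of_nat (n - 2) * Bop r (m - 2) (Aop r (n - 2) u) x"
proof (cases "2 \<le> m")
  case True
  then have "(\<Sum>k\<in>{1..n}. (if 2 \<le> m \<and> k \<le> n - 2 then
       of_nat k * Bop r (m - 2) (cop r (int k) (Aop r (n - 2 - k) u)) x else 0)) =
      of_nat (n - 2) * Bop r (m - 2) (Aop r (n - 2) u) x"
    unfolding sum_atLeastAtMost_if_le[OF diff_le_self, of n 2, symmetric] Bop_Aop_recurrence[symmetric]
    by simp
  then show ?thesis using True by (simp add: both_ge_2_def)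
qed (simp add: both_ge_2_def)

lemma exchange_cancellation:
  fixes G :: "nat \<Rightarrow> complex"
  assumes eq: "of_nat n * a = of_nat n * b + (\<Sum>k\<in>{1..min n m}. \<phi> k * G k)
           - both_ge_2 n m * of_nat (n - 2) * G 2 - (\<Sum>k\<in>{1..min n m - 2}. \<phi> k * G (k + 2))"
    and n: "n \<noteq> 0" and phi: "\<And>k. 1 \<le> k \<Longrightarrow> \<phi> k = (if even k then -2 else 0)"
  shows "a = b - both_ge_2 n m * G 2"
proof -
  have "of_nat n * a = of_nat n * b + (if 2 \<le> min n m then -2 * G 2 else 0)
          - both_ge_2 n m * of_nat (n - 2) * G 2"
    using eq sum_even_weights_shift[where \<phi> = \<phi> and M = "min n m" and F = G, OF phi] by simp
  also have "\<dots> = of_nat n * (b - both_ge_2 n m * G 2)"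
  proof (cases "2 \<le> n \<and> 2 \<le> m")
    case True
    then have "(of_nat n :: complex) = of_nat (n - 2) + 2" by (simp add: of_nat_diff)
    then show ?thesis using True by (simp add: both_ge_2_def algebra_simps)
  qed (auto simp: both_ge_2_def)
  finally show ?thesis using n by simp
qed

lemma cop_apply_exchange:
  assumes k: "1 \<le> k"
    and exch: "Aop r n (Bop r m u) = (\<lambda>x. Bop r m (Aop r n u) x - c * Bop r (m - 2) (Aop r (n - 2) u) x)"
  shows "cop r (int k) (Aop r n (Bop r m u)) x = Bop r m (cop r (int k) (Aop r n u)) x
           + (if k \<le> m then cop_bracket r (int k) * Bop r (m - k) (Aop r n u) x else 0)
           - c * (Bop r (m - 2) (cop r (int k) (Aop r (n - 2) u)) x
           + (if k \<le> m - 2 then cop_bracket r (int k) * Bop r (m - 2 - k) (Aop r (n - 2) u) x else 0))"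
proof -
  have "cop r (int k) (Aop r n (Bop r m u)) x =
        cop r (int k) (Bop r m (Aop r n u)) x - c * cop r (int k) (Bop r (m - 2) (Aop r (n - 2) u)) x"
    unfolding exch linop_diff[OF linop_cop] linop_scale[OF linop_cop] by simp
  then show ?thesis
    unfolding cop_Bop_commutator[OF k] by simp
qed

lemma Aop_Bop_exchange:
  assumes rq: "r \<notin> \<rat>"
  shows "Aop r n (Bop r m u) = (\<lambda>x. Bop r m (Aop r n u) x - both_ge_2 n m * Bop r (m - 2) (Aop r (n - 2) u) x)"
proof (induction n rule: less_induct)
  case (less n)
  show ?case
  proof (cases "n = 0")
    case True then show ?thesis by (simp add: Aop_0 both_ge_2_def)
  next
    case False
    show ?thesis
    proof (rule ext)
      fix x
      define G where "G j = Bop r (m - j) (Aop r (n - j) u) x" for j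
      define \<phi> where "\<phi> k = of_nat k * cop_bracket r (int k)" for k
      have phi: "\<And>k. 1 \<le> k \<Longrightarrow> \<phi> k = (if even k then -2 else 0)"
        unfolding \<phi>_def using cop_bracket_value[OF rq, of "int k" for k] by simp
      have summand: "of_nat k * cop r (int k) (Aop r (n - k) (Bop r m u)) x =
          of_nat k * Bop r m (cop r (int k) (Aop r (n - k) u)) x
          + (if k \<le> min n m then \<phi> k * G k else 0)
          - (if 2 \<le> m \<and> k \<le> n - 2 then of_nat k * Bop r (m - 2) (cop r (int k) (Aop r (n - 2 - k) u)) x else 0)
          - (if k \<le> min n m - 2 then \<phi> k * G (k + 2) else 0)"
        if k: "k \<in> {1..n}" for k
      proof -
        from k have "n - k < n" by auto
        then have ih: "Aop r (n - k) (Bop r m u) =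
            (\<lambda>x. Bop r m (Aop r (n - k) u) x - both_ge_2 (n - k) m * Bop r (m - 2) (Aop r (n - k - 2) u) x)"
          using less by blast
        have e: "cop r (int k) (Aop r (n - k) (Bop r m u)) x = Bop r m (cop r (int k) (Aop r (n - k) u)) x
              + (if k \<le> m then cop_bracket r (int k) * Bop r (m - k) (Aop r (n - k) u) x else 0)
              - both_ge_2 (n - k) m * (Bop r (m - 2) (cop r (int k) (Aop r (n - k - 2) u)) x
              + (if k \<le> m - 2 then cop_bracket r (int k) * Bop r (m - 2 - k) (Aop r (n - k - 2) u) x else 0))"
          using k by (intro cop_apply_exchange ih) simp
        have G2: "Bop r (m - 2 - k) (Aop r (n - k - 2) u) x = G (k + 2)"
          unfolding G_def by (simp add: diff_diff_add add.commute)
        have nk: "n - k - 2 = n - 2 - k" by simp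
        show ?thesis
          unfolding e G2 nk using k
          by (auto simp: both_ge_2_def \<phi>_def G_def algebra_simps)
      qed
      have "of_nat n * Aop r n (Bop r m u) x = (\<Sum>k\<in>{1..n}. of_nat k * cop r (int k) (Aop r (n - k) (Bop r m u)) x)"
        by (rule Aop_recurrence)
      also have "\<dots> = (\<Sum>k\<in>{1..n}. of_nat k * Bop r m (cop r (int k) (Aop r (n - k) u)) x
          + (if k \<le> min n m then \<phi> k * G k else 0)
          - (if 2 \<le> m \<and> k \<le> n - 2 then of_nat k * Bop r (m - 2) (cop r (int k) (Aop r (n - 2 - k) u)) x else 0)
          - (if k \<le> min n m - 2 then \<phi> k * G (k + 2) else 0))"
        by (rule sum.cong[OF refl]) (rule summand)
      also have "\<dots> = of_nat n * Bop r m (Aop r n u) x + (\<Sum>k\<in>{1..min n m}. \<phi> k * G k)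
           - both_ge_2 n m * of_nat (n - 2) * G 2 - (\<Sum>k\<in>{1..min n m - 2}. \<phi> k * G (k + 2))"
        unfolding sum_subtractf sum.distrib Bop_Aop_correction_sum Bop_Aop_recurrence
          sum_atLeastAtMost_if_le[OF min.cobounded1]
          sum_atLeastAtMost_if_le[OF order_trans[OF diff_le_self[of "min n m" 2] min.cobounded1]]
        by (simp add: G_def)
      finally have "Aop r n (Bop r m u) x = Bop r m (Aop r n u) x - both_ge_2 n m * G 2"
        using False phi by (rule exchange_cancellation)
      then show "Aop r n (Bop r m u) x = Bop r m (Aop r n u) x - both_ge_2 n m * Bop r (m - 2) (Aop r (n - 2) u) x"
        unfolding G_def by simp
    qed
  qed
qed

section \<open>Degree bounds\<close>

definition deg :: "mono \<Rightarrow> nat" where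
  "deg M = (\<Sum>i\<in>Poly_Mapping.keys M. snd i * Poly_Mapping.lookup M i)"

lemma deg_superset: "finite S \<Longrightarrow> Poly_Mapping.keys M \<subseteq> S \<Longrightarrow> deg M = (\<Sum>i\<in>S. snd i * Poly_Mapping.lookup M i)"
  unfolding deg_def by (rule sum.mono_neutral_left) (auto simp: in_keys_iff)

lemma deg_add: "deg (M + N) = deg M + deg N"
proof -
  define S where "S = Poly_Mapping.keys M \<union> Poly_Mapping.keys N"
  have fS: "finite S" unfolding S_def by simp
  have "deg (M + N) = (\<Sum>i\<in>S. snd i * Poly_Mapping.lookup (M + N) i)"
    by (rule deg_superset[OF fS]) (use keys_add[of M N] in \<open>simp add: S_def\<close>)
  also have "\<dots> = (\<Sum>i\<in>S. snd i * Poly_Mapping.lookup M i) + (\<Sum>i\<in>S. snd i * Poly_Mapping.lookup N i)"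
    by (simp add: lookup_add distrib_left sum.distrib)
  also have "\<dots> = deg M + deg N"
    using deg_superset[OF fS, of M] deg_superset[OF fS, of N] by (simp add: S_def)
  finally show ?thesis .
qed

lemma deg_single: "deg (Poly_Mapping.single v (Suc 0)) = snd v"
  unfolding deg_def by simp

lemma deg_minus_single: "0 < Poly_Mapping.lookup M v \<Longrightarrow> deg M = deg (M - Poly_Mapping.single v (Suc 0)) + snd v"
  using minus_add_single[of M v] deg_add[of "M - Poly_Mapping.single v (Suc 0)" "Poly_Mapping.single v (Suc 0)"]
  by (simp add: deg_single)

definition deg_bounded :: "int \<Rightarrow> fvec \<Rightarrow> bool" where
  "deg_bounded D u \<longleftrightarrow> (\<forall>b M. D < int (deg M) \<longrightarrow> u (b, M) = 0)"

lemma deg_bounded_neg: "deg_bounded D u \<Longrightarrow> D < 0 \<Longrightarrow> u = (\<lambda>_. 0)"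
  unfolding deg_bounded_def by (auto simp: fun_eq_iff)

lemma deg_bounded_zero: "deg_bounded D (\<lambda>_. 0)" unfolding deg_bounded_def by simp

lemma deg_bounded_sum_scale: "(\<And>i. i \<in> I \<Longrightarrow> deg_bounded D (g i)) \<Longrightarrow> deg_bounded D (\<lambda>x. \<Sum>i\<in>I. c i * g i x)"
  unfolding deg_bounded_def by (auto intro: sum.neutral)

lemma deg_bounded_dop: assumes "deg_bounded D u" shows "deg_bounded (D - k) (dop r s k u)"
  unfolding deg_bounded_def
proof (intro allI impI)
  fix b M assume dM: "D - k < int (deg M)"
  show "dop r s k u (b, M) = 0"
  proof (cases "k < 0")
    case True
    show ?thesis
    proof (cases "0 < Poly_Mapping.lookup M (s, nat (-k))")
      case True
      have "deg M = deg (M - Poly_Mapping.single (s, nat (-k)) (Suc 0)) + nat (- k)"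
        using deg_minus_single[OF True] by simp
      then have "D < int (deg (M - Poly_Mapping.single (s, nat (-k)) (Suc 0)))" using dM \<open>k < 0\<close> by simp
      then show ?thesis using assms True \<open>k < 0\<close> unfolding deg_bounded_def dop_def by simp
    qed (use True in \<open>simp add: dop_def\<close>)
  next
    case False
    show ?thesis
    proof (cases "k = 0")
      case True then show ?thesis by (simp add: dop_def)
    next
      case False
      then have kp: "0 < k" using \<open>\<not> k < 0\<close> by simp
      have "deg (M + Poly_Mapping.single (\<not> s, nat k) (Suc 0)) = deg M + nat k"
        by (simp add: deg_add deg_single)
      then have "D < int (deg (M + Poly_Mapping.single (\<not> s, nat k) (Suc 0)))" using dM kp by simp
      then show ?thesis using assms kp unfolding deg_bounded_def dop_def by simp
    qed
  qed
qed

lemma deg_bounded_cop: "deg_bounded D u \<Longrightarrow> deg_bounded (D - k) (cop r k u)"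
  unfolding cop_def using deg_bounded_dop[of D u k r False] deg_bounded_dop[of D u k r True]
  unfolding deg_bounded_def by simp

lemma deg_bounded_delta: "deg_bounded D u \<Longrightarrow> deg_bounded D (delta r u)"
  unfolding deg_bounded_def delta_def by simp

lemma deg_bounded_foldr_pos: "deg_bounded D u \<Longrightarrow> deg_bounded (D - int (sum_list ks)) (foldr (\<lambda>k. cop r (int k)) ks u)"
proof (induction ks arbitrary: D)
  case Nil then show ?case by simp
next
  case (Cons k ks)
  have "deg_bounded (D - int (sum_list ks) - int k) (cop r (int k) (foldr (\<lambda>k. cop r (int k)) ks u))"
    by (rule deg_bounded_cop) (rule Cons.IH[OF Cons.prems])
  then show ?case by (simp add: algebra_simps)
qed

lemma deg_bounded_foldr_neg: "deg_bounded D u \<Longrightarrow> deg_bounded (D + int (sum_list ks)) (foldr (\<lambda>k. cop r (- int k)) ks u)"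
proof (induction ks arbitrary: D)
  case Nil then show ?case by simp
next
  case (Cons k ks)
  have "deg_bounded (D + int (sum_list ks) - (- int k)) (cop r (- int k) (foldr (\<lambda>k. cop r (- int k)) ks u))"
    by (rule deg_bounded_cop) (rule Cons.IH[OF Cons.prems])
  then show ?case by (simp add: algebra_simps)
qed

lemma deg_bounded_Aop: assumes "deg_bounded D u" shows "deg_bounded (D - int n) (Aop r n u)"
proof -
  have "deg_bounded (D - int n) (\<lambda>x. \<Sum>ks\<in>comps n. (1 / of_nat (fact (length ks))) * foldr (\<lambda>k. cop r (int k)) ks u x)"
    by (rule deg_bounded_sum_scale) (use deg_bounded_foldr_pos[OF assms] in \<open>auto simp: comps_def\<close>)
  then show ?thesis unfolding Aop_def expcoef_def by simp
qed

lemma deg_bounded_Bop: assumes "deg_bounded D u" shows "deg_bounded (D + int n) (Bop r n u)"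
proof -
  have "deg_bounded (D + int n) (\<lambda>x. \<Sum>ks\<in>comps n. (1 / of_nat (fact (length ks))) * foldr (\<lambda>k. cop r (- int k)) ks u x)"
    by (rule deg_bounded_sum_scale) (use deg_bounded_foldr_neg[OF assms] in \<open>auto simp: comps_def\<close>)
  then show ?thesis unfolding Bop_def expcoef_def by simp
qed

lemma Aop_vanish: "deg_bounded D u \<Longrightarrow> D < int n \<Longrightarrow> Aop r n u = (\<lambda>_. 0)"
  by (rule deg_bounded_neg[OF deg_bounded_Aop]) auto

text \<open>Extension by zero to negative indices: \<open>S_j\<close> only involves \<open>A_{p+j}\<close> with \<open>p + j \<ge> 0\<close>.\<close>

definition Aint :: "real \<Rightarrow> int \<Rightarrow> fvec \<Rightarrow> fvec" where
  "Aint r j u = (if j < 0 then (\<lambda>_. 0) else Aop r (nat j) u)"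

definition Bint :: "real \<Rightarrow> int \<Rightarrow> fvec \<Rightarrow> fvec" where
  "Bint r j u = (if j < 0 then (\<lambda>_. 0) else Bop r (nat j) u)"

lemma linop_Aint: "linop (Aint r j)"
  unfolding Aint_def by (cases "j < 0") (auto simp: linop_def linop_Aop[unfolded linop_def])

lemma linop_Bint: "linop (Bint r j)"
  unfolding Bint_def by (cases "j < 0") (auto simp: linop_def linop_Bop[unfolded linop_def])

lemma deg_bounded_Aint: "deg_bounded D u \<Longrightarrow> deg_bounded (D - j) (Aint r j u)"
  unfolding Aint_def using deg_bounded_Aop[where D=D and u=u and r=r and n="nat j"] by (auto simp: deg_bounded_zero)

lemma Aint_vanish: "deg_bounded D u \<Longrightarrow> D < j \<Longrightarrow> Aint r j u = (\<lambda>_. 0)"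
  unfolding Aint_def using Aop_vanish[where D=D and u=u and r=r and n="nat j"] by auto

lemma delta_Aint: "delta r (Aint r j u) = Aint r j (delta r u)"
  unfolding Aint_def by (cases "j < 0") (simp_all add: delta_Aop linop_zero[OF linop_delta])

lemma Aint_Aint: "Aint r i (Aint r j u) = Aint r j (Aint r i u)"
  unfolding Aint_def by (auto simp: Aop_commute linop_zero[OF linop_Aop])

lemma Aint_Bop_exchange:
  assumes rq: "r \<notin> \<rat>"
  shows "Aint r n (Bop r q u) = (\<lambda>x. Bop r q (Aint r n u) x - Bint r (int q - 2) (Aint r (n - 2) u) x)"
proof (cases "n < 0")
  case True
  then show ?thesis by (simp add: Aint_def Bint_def linop_zero[OF linop_Bop])
next
  case False
  have e: "Aint r n (Bop r q u) = (\<lambda>x. Bop r q (Aop r (nat n) u) x - both_ge_2 (nat n) q * Bop r (q - 2) (Aop r (nat n - 2) u) x)"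
    using False Aop_Bop_exchange[OF rq, of "nat n" q u] by (simp add: Aint_def)
  show ?thesis
  proof (cases "2 \<le> n \<and> 2 \<le> q")
    case True
    have "nat (n - 2) = nat n - 2" "nat (int q - 2) = q - 2" "2 \<le> nat n" using True by auto
    then show ?thesis unfolding e using True False by (simp add: Aint_def Bint_def both_ge_2_def)
  next
    case F2: False
    then have "both_ge_2 (nat n) q = 0" unfolding both_ge_2_def by auto
    moreover have "Bint r (int q - 2) (Aint r (n - 2) u) = (\<lambda>_. 0)"
      using F2 by (auto simp: Aint_def Bint_def linop_zero[OF linop_Bop])
    ultimately show ?thesis unfolding e using False by (simp add: Aint_def)
  qed
qed

lemma deg_bounded_sum: "(\<And>i. i \<in> I \<Longrightarrow> deg_bounded D (g i)) \<Longrightarrow> deg_bounded D (\<lambda>x. \<Sum>i\<in>I. g i x)"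
  using deg_bounded_sum_scale[of I D g "\<lambda>_. 1"] by simp

lemma delta_sum: "(\<lambda>x. \<Sum>i\<in>I. delta r (g i) x) = delta r (\<lambda>x. \<Sum>i\<in>I. g i x)"
  unfolding delta_def by (auto simp: fun_eq_iff)

lemma Sop_eq_finite_sum:
  assumes v: "deg_bounded D v" and N: "D - j < int N"
  shows "Sop r j v = delta r (\<lambda>x. \<Sum>p<N. Bop r p (Aint r (int p + j) v) x)"
proof -
  have "(\<lambda>x. infsum (\<lambda>p. Bop r p (Aop r (nat (int p + j)) v) x) {p. 0 \<le> int p + j}) =
        (\<lambda>x. \<Sum>p<N. Bop r p (Aint r (int p + j) v) x)"
  proof (rule ext)
    fix x
    have "infsum (\<lambda>p. Bop r p (Aop r (nat (int p + j)) v) x) {p. 0 \<le> int p + j} =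
          infsum (\<lambda>p. Bop r p (Aint r (int p + j) v) x) {..<N}"
    proof (rule infsum_cong_neutral)
      fix p assume "p \<in> {..<N} - {p. 0 \<le> int p + j}"
      then show "Bop r p (Aint r (int p + j) v) x = 0"
        by (simp add: Aint_def linop_zero[OF linop_Bop])
    next
      fix p assume p: "p \<in> {p. 0 \<le> int p + j} - {..<N}"
      then have "Aop r (nat (int p + j)) v = (\<lambda>_. 0)"
        using N by (intro Aop_vanish[OF v]) auto
      then show "Bop r p (Aop r (nat (int p + j)) v) x = 0"
        by (simp add: linop_zero[OF linop_Bop])
    next
      fix p assume "p \<in> {p. 0 \<le> int p + j} \<inter> {..<N}"
      then show "Bop r p (Aop r (nat (int p + j)) v) x = Bop r p (Aint r (int p + j) v) x"
        by (simp add: Aint_def)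
    qed
    then show "infsum (\<lambda>p. Bop r p (Aop r (nat (int p + j)) v) x) {p. 0 \<le> int p + j} =
          (\<Sum>p<N. Bop r p (Aint r (int p + j) v) x)" by simp
  qed
  then show ?thesis unfolding Sop_def Bop_def[symmetric] Aop_def[symmetric] by simp
qed

lemma deg_bounded_Sop_sum: assumes v: "deg_bounded D v" shows "deg_bounded (D - j) (\<lambda>x. \<Sum>p<N. Bop r p (Aint r (int p + j) v) x)"
proof (rule deg_bounded_sum)
  fix p
  have "deg_bounded (D - (int p + j)) (Aint r (int p + j) v)" by (rule deg_bounded_Aint[OF v])
  then have "deg_bounded (D - (int p + j) + int p) (Bop r p (Aint r (int p + j) v))" by (rule deg_bounded_Bop)
  then show "deg_bounded (D - j) (Bop r p (Aint r (int p + j) v))" by simp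
qed

lemma deg_bounded_Sop: assumes v: "deg_bounded D v" shows "deg_bounded (D - j) (Sop r j v)"
proof -
  have "D - j < int (nat (\<bar>D\<bar> + \<bar>j\<bar> + 1))" by simp
  then have rep: "Sop r j v = delta r (\<lambda>x. \<Sum>p<nat (\<bar>D\<bar> + \<bar>j\<bar> + 1). Bop r p (Aint r (int p + j) v) x)"
    by (rule Sop_eq_finite_sum[OF v])
  show ?thesis unfolding rep by (rule deg_bounded_delta[OF deg_bounded_Sop_sum[OF v]])
qed

section \<open>Anticommutation of screening modes\<close>

definition Spair :: "real \<Rightarrow> nat \<Rightarrow> int \<Rightarrow> int \<Rightarrow> fvec \<Rightarrow> fvec" where
  "Spair r N \<alpha> \<beta> u = (\<lambda>x. \<Sum>p<N. \<Sum>q<N. Bop r p (Bop r q (Aint r (int p + \<alpha>) (Aint r (int q + \<beta>) u))) x)"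

lemma Spair_sym: "Spair r N \<alpha> \<beta> u = Spair r N \<beta> \<alpha> u"
proof -
  have e: "Bop r q (Bop r p (Aint r (int q + \<beta>) (Aint r (int p + \<alpha>) u))) =
           Bop r p (Bop r q (Aint r (int p + \<alpha>) (Aint r (int q + \<beta>) u)))" for p q
    by (simp only: Bop_commute[of r q p] Aint_Aint[of r "int q + \<beta>" "int p + \<alpha>"])
  show ?thesis unfolding Spair_def
    by (rule ext, subst sum.swap) (simp only: e)
qed

lemma sum_lessThan_shift2:
  fixes f :: "nat \<Rightarrow> complex"
  assumes "f 0 = 0" "f 1 = 0" "f N = 0" "f (Suc N) = 0"
  shows "(\<Sum>q<N. f q) = (\<Sum>q<N. f (q + 2))"
proof -
  have "(\<Sum>q<Suc (Suc N). f q) = (\<Sum>q<N. f q)"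
    using assms by simp
  moreover have "(\<Sum>q<Suc (Suc N). f q) = f 0 + (f 1 + (\<Sum>q<N. f (q + 2)))"
    by (simp add: sum.lessThan_Suc_shift del: sum.lessThan_Suc)
  ultimately show ?thesis using assms by simp
qed

text \<open>The correction term of the exchange relation, reindexed by \<open>q \<mapsto> q + 2\<close>, is exactly
  the double sum with shifted indices \<open>(a - 2, b + 2)\<close>.\<close>

lemma Bop_Aint_exchange_sum:
  assumes rq: "r \<notin> \<rat>" and u: "deg_bounded D u" and N: "D - b < int N"
  defines "w \<equiv> (\<lambda>x. \<Sum>q<N. Bop r q (Aint r (int q + b) u) x)"
  shows "Bop r p (Aint r (int p + a) w) x =
      (\<Sum>q<N. Bop r p (Bop r q (Aint r (int p + a) (Aint r (int q + b) u))) x)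
    - (\<Sum>q<N. Bop r p (Bop r q (Aint r (int p + (a - 2)) (Aint r (int q + (b + 2)) u))) x)"
proof -
  have linBA: "linop (\<lambda>v. Bop r p (Aint r j v))" for j by (rule linop_comp[OF linop_Bop linop_Aint])
  have "Bop r p (Aint r (int p + a) w) x = (\<Sum>q<N. Bop r p (Aint r (int p + a) (Bop r q (Aint r (int q + b) u))) x)"
    unfolding w_def using fun_cong[OF linop_sum[OF linBA[of "int p + a"], of "\<lambda>q. Bop r q (Aint r (int q + b) u)" "{..<N}"], of x]
    by simp
  also have "\<dots> = (\<Sum>q<N. Bop r p (Bop r q (Aint r (int p + a) (Aint r (int q + b) u))) x
       - Bop r p (Bint r (int q - 2) (Aint r (int p + a - 2) (Aint r (int q + b) u))) x)"
    by (rule sum.cong[OF refl]) (simp add: Aint_Bop_exchange[OF rq] linop_diff[OF linop_Bop])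
  also have "\<dots> = (\<Sum>q<N. Bop r p (Bop r q (Aint r (int p + a) (Aint r (int q + b) u))) x)
       - (\<Sum>q<N. Bop r p (Bint r (int q - 2) (Aint r (int p + a - 2) (Aint r (int q + b) u))) x)"
    by (rule sum_subtractf)
  also have "(\<Sum>q<N. Bop r p (Bint r (int q - 2) (Aint r (int p + a - 2) (Aint r (int q + b) u))) x)
      = (\<Sum>q<N. Bop r p (Bint r (int (q + 2) - 2) (Aint r (int p + a - 2) (Aint r (int (q + 2) + b) u))) x)"
  proof (rule sum_lessThan_shift2[where f = "\<lambda>q. Bop r p (Bint r (int q - 2) (Aint r (int p + a - 2) (Aint r (int q + b) u))) x"])
    show "Bop r p (Bint r (int 0 - 2) (Aint r (int p + a - 2) (Aint r (int 0 + b) u))) x = 0"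
      by (simp add: Bint_def linop_zero[OF linop_Bop])
    show "Bop r p (Bint r (int 1 - 2) (Aint r (int p + a - 2) (Aint r (int 1 + b) u))) x = 0"
      by (simp add: Bint_def linop_zero[OF linop_Bop])
    have z: "Aint r (int N + b) u = (\<lambda>_. 0)" "Aint r (int (Suc N) + b) u = (\<lambda>_. 0)"
      using N by (auto intro: Aint_vanish[OF u])
    show "Bop r p (Bint r (int N - 2) (Aint r (int p + a - 2) (Aint r (int N + b) u))) x = 0"
      by (simp only: z linop_zero[OF linop_Aint] linop_zero[OF linop_Bint] linop_zero[OF linop_Bop])
    show "Bop r p (Bint r (int (Suc N) - 2) (Aint r (int p + a - 2) (Aint r (int (Suc N) + b) u))) x = 0"
      by (simp only: z linop_zero[OF linop_Aint] linop_zero[OF linop_Bint] linop_zero[OF linop_Bop])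
  qed
  also have "\<dots> = (\<Sum>q<N. Bop r p (Bop r q (Aint r (int p + (a - 2)) (Aint r (int q + (b + 2)) u))) x)"
  proof (rule sum.cong[OF refl])
    fix q
    have i1: "int (q + 2) - 2 = int q" "int p + a - 2 = int p + (a - 2)" "int (q + 2) + b = int q + (b + 2)" by simp_all
    have i2: "Bint r (int q) v = Bop r q v" for v by (simp add: Bint_def)
    show "Bop r p (Bint r (int (q + 2) - 2) (Aint r (int p + a - 2) (Aint r (int (q + 2) + b) u))) x =
         Bop r p (Bop r q (Aint r (int p + (a - 2)) (Aint r (int q + (b + 2)) u))) x"
      unfolding i1 i2 ..
  qed
  finally show ?thesis .
qed

lemma Sop_Sop_eq_Spair:
  assumes rq: "r \<notin> \<rat>" and u: "deg_bounded D u" and N1: "D - b < int N" and N2: "D - b - a < int N"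
  shows "Sop r a (Sop r b u) = delta r (delta r (\<lambda>x. Spair r N a b u x - Spair r N (a - 2) (b + 2) u x))"
proof -
  define w where "w = (\<lambda>x. \<Sum>q<N. Bop r q (Aint r (int q + b) u) x)"
  have inner: "Sop r b u = delta r w" unfolding w_def by (rule Sop_eq_finite_sum[OF u N1])
  have "deg_bounded (D - b) (delta r w)"
    unfolding w_def by (rule deg_bounded_delta[OF deg_bounded_Sop_sum[OF u]])
  then have outer: "Sop r a (delta r w) = delta r (\<lambda>x. \<Sum>p<N. Bop r p (Aint r (int p + a) (delta r w)) x)"
    by (rule Sop_eq_finite_sum) (use N2 in simp)
  have delta_out: "(\<lambda>x. \<Sum>p<N. Bop r p (Aint r (int p + a) (delta r w)) x) =
      delta r (\<lambda>x. \<Sum>p<N. Bop r p (Aint r (int p + a) w) x)"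
    by (simp only: delta_Aint[symmetric] delta_Bop[symmetric] delta_sum)
  have "(\<lambda>x. \<Sum>p<N. Bop r p (Aint r (int p + a) w) x) = (\<lambda>x. Spair r N a b u x - Spair r N (a - 2) (b + 2) u x)"
    unfolding w_def Bop_Aint_exchange_sum[OF rq u N1] Spair_def by (simp add: sum_subtractf)
  then show ?thesis unfolding inner outer delta_out by simp
qed

lemma Sop_Sop_anticommute:
  assumes rq: "r \<notin> \<rat>" and u: "deg_bounded D u"
  shows "Sop r a (Sop r b u) = (\<lambda>x. - Sop r (b + 2) (Sop r (a - 2) u) x)"
proof -
  define N where "N = nat (\<bar>D\<bar> + \<bar>a\<bar> + \<bar>b\<bar> + 10)"
  have e1: "Sop r a (Sop r b u) = delta r (delta r (\<lambda>x. Spair r N a b u x - Spair r N (a - 2) (b + 2) u x))"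
    by (rule Sop_Sop_eq_Spair[OF rq u]) (simp_all add: N_def)
  have e2: "Sop r (b + 2) (Sop r (a - 2) u) = delta r (delta r (\<lambda>x. Spair r N (b + 2) (a - 2) u x - Spair r N (b + 2 - 2) (a - 2 + 2) u x))"
    by (rule Sop_Sop_eq_Spair[OF rq u]) (simp_all add: N_def)
  define F where "F = (\<lambda>x. Spair r N a b u x - Spair r N (a - 2) (b + 2) u x)"
  have e3: "(\<lambda>x. Spair r N (b + 2) (a - 2) u x - Spair r N (b + 2 - 2) (a - 2 + 2) u x) = (\<lambda>x. - F x)"
    unfolding F_def by (simp add: Spair_sym[of r N "b + 2" "a - 2" u] Spair_sym[of r N b a u])
  have "Sop r (b + 2) (Sop r (a - 2) u) = delta r (delta r (\<lambda>x. - F x))" unfolding e2 e3 ..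
  also have "\<dots> = delta r (\<lambda>x. - delta r F x)" by (simp only: linop_neg[OF linop_delta])
  also have "\<dots> = (\<lambda>x. - delta r (delta r F) x)" by (simp only: linop_neg[OF linop_delta])
  finally show ?thesis unfolding e1 F_def[symmetric] by simp
qed

section \<open>Screening charges and the operator W\<close>

lemma Fock_deg_bounded: assumes "v \<in> Fock a" shows "\<exists>D. deg_bounded D v"
proof -
  define S where "S = {x. v x \<noteq> 0}"
  have fS: "finite S" using assms unfolding Fock_def S_def by simp
  define D where "D = int (\<Sum>x\<in>S. deg (snd x))"
  have "deg_bounded D v" unfolding deg_bounded_def
  proof (intro allI impI)
    fix b M assume d: "D < int (deg M)"
    show "v (b, M) = 0"
    proof (rule ccontr)
      assume "v (b, M) \<noteq> 0"
      then have "(b, M) \<in> S" unfolding S_def by simp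
      then have "deg (snd (b, M)) \<le> (\<Sum>x\<in>S. deg (snd x))" by (rule member_le_sum) (use fS in auto)
      then show False using d unfolding D_def by simp
    qed
  qed
  then show ?thesis by blast
qed

lemma Sop_zero: "Sop r j (\<lambda>_. 0) = (\<lambda>_. 0)"
proof -
  have "0 - j < int (nat (\<bar>j\<bar> + 1))" by simp
  then have "Sop r j (\<lambda>_. 0) = delta r (\<lambda>x. \<Sum>p<nat (\<bar>j\<bar> + 1). Bop r p (Aint r (int p + j) (\<lambda>_. 0)) x)"
    by (rule Sop_eq_finite_sum[OF deg_bounded_zero])
  also have "\<dots> = (\<lambda>_. 0)"
    by (simp add: linop_zero[OF linop_Aint] linop_zero[OF linop_Bop] linop_zero[OF linop_delta])
  finally show ?thesis .
qed

lemma Sop_vanish: assumes v: "deg_bounded D v" and j: "D < j" shows "Sop r j v = (\<lambda>_. 0)"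
proof -
  have "D - j < int (nat (\<bar>D\<bar> + \<bar>j\<bar> + 1))" by simp
  then have "Sop r j v = delta r (\<lambda>x. \<Sum>p<nat (\<bar>D\<bar> + \<bar>j\<bar> + 1). Bop r p (Aint r (int p + j) v) x)"
    by (rule Sop_eq_finite_sum[OF v])
  also have "\<dots> = (\<lambda>_. 0)"
  proof -
    have "Aint r (int p + j) v = (\<lambda>_. 0)" for p using j by (intro Aint_vanish[OF v]) simp
    then show ?thesis by (simp add: linop_zero[OF linop_Bop] linop_zero[OF linop_delta])
  qed
  finally show ?thesis .
qed

lemma Sop_sum_scale:
  assumes g: "\<And>k. k \<in> I \<Longrightarrow> deg_bounded D (g k)"
  shows "Sop r j (\<lambda>x. \<Sum>k\<in>I. c k * g k x) = (\<lambda>x. \<Sum>k\<in>I. c k * Sop r j (g k) x)"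
proof -
  define N where "N = nat (\<bar>D\<bar> + \<bar>j\<bar> + 1)"
  have N: "D - j < int N" unfolding N_def by simp
  have linBA: "linop (\<lambda>v. Bop r p (Aint r j v))" for p j by (rule linop_comp[OF linop_Bop linop_Aint])
  have rep: "Sop r j (g k) = delta r (\<lambda>x. \<Sum>p<N. Bop r p (Aint r (int p + j) (g k)) x)" if "k \<in> I" for k
    by (rule Sop_eq_finite_sum[OF g[OF that] N])
  have "Sop r j (\<lambda>x. \<Sum>k\<in>I. c k * g k x) =
        delta r (\<lambda>x. \<Sum>p<N. Bop r p (Aint r (int p + j) (\<lambda>x. \<Sum>k\<in>I. c k * g k x)) x)"
    by (rule Sop_eq_finite_sum[OF deg_bounded_sum_scale[OF g] N])
  also have "(\<lambda>x. \<Sum>p<N. Bop r p (Aint r (int p + j) (\<lambda>x. \<Sum>k\<in>I. c k * g k x)) x) =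
      (\<lambda>x. \<Sum>k\<in>I. c k * (\<lambda>x. \<Sum>p<N. Bop r p (Aint r (int p + j) (g k)) x) x)"
    by (simp add: linop_sum_scale[OF linBA] sum_distrib_left sum.swap[of _ "{..<N}"])
  also have "delta r \<dots> = (\<lambda>x. \<Sum>k\<in>I. c k * delta r (\<lambda>x. \<Sum>p<N. Bop r p (Aint r (int p + j) (g k)) x) x)"
    by (rule linop_sum_scale[OF linop_delta])
  also have "\<dots> = (\<lambda>x. \<Sum>k\<in>I. c k * Sop r j (g k) x)"
    by (rule ext, rule sum.cong[OF refl]) (simp add: rep)
  finally show ?thesis .
qed

lemma Sop_neg: assumes "deg_bounded D u" shows "Sop r j (\<lambda>x. - u x) = (\<lambda>x. - Sop r j u x)"
proof -
  have "Sop r j (\<lambda>x. \<Sum>k\<in>{0::nat}. (-1) * u x) = (\<lambda>x. \<Sum>k\<in>{0::nat}. (-1) * Sop r j u x)"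
    by (rule Sop_sum_scale[where g = "\<lambda>_. u"]) (use assms in simp)
  then show ?thesis by simp
qed

lemma W_op_eq_finite_sum:
  assumes v: "deg_bounded D v" and K: "D - (m - n + 1) < int K"
  shows "W_op r m n v = (\<lambda>x. \<Sum>k\<in>{1..K}. Fcoef r n k * Sop r (m - n + 3 - int k) (Sop r (m - n + 1 + int k) v) x)"
proof (rule ext)
  fix x
  have "infsum (\<lambda>k. Fcoef r n k * Sop r (m - n + 3 - int k) (Sop r (m - n + 1 + int k) v) x) {1..} =
        infsum (\<lambda>k. Fcoef r n k * Sop r (m - n + 3 - int k) (Sop r (m - n + 1 + int k) v) x) {1..K}"
  proof (rule infsum_cong_neutral)
    fix k assume "k \<in> {1..} - {1..K}"
    then have "D < m - n + 1 + int k" using K by auto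
    then have "Sop r (m - n + 1 + int k) v = (\<lambda>_. 0)" by (rule Sop_vanish[OF v])
    then show "Fcoef r n k * Sop r (m - n + 3 - int k) (Sop r (m - n + 1 + int k) v) x = 0"
      by (simp add: Sop_zero)
  qed auto
  then show "W_op r m n v x = (\<Sum>k\<in>{1..K}. Fcoef r n k * Sop r (m - n + 3 - int k) (Sop r (m - n + 1 + int k) v) x)"
    unfolding W_op_def by simp
qed

lemma sgnpow_minus_2: "sgnpow (n - 2) = sgnpow n"
proof -
  have parity: "sgnpow x = (if even x then 1 else -1)" for x
    unfolding sgnpow_def by (simp add: even_nat_iff)
  show ?thesis unfolding parity by simp
qed

lemma Fcoef_minus_2: "Fcoef r (n - 2) k = Fcoef r n k"
  unfolding Fcoef_def sgnpow_minus_2 ..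

lemma Sop_square_zero:
  assumes "r \<notin> \<rat>" and "deg_bounded D v"
  shows "Sop r (j + 2) (Sop r j v) = (\<lambda>_. 0)"
proof -
  have "Sop r (j + 2) (Sop r j v) = (\<lambda>x. - Sop r (j + 2) (Sop r j v) x)"
    using Sop_Sop_anticommute[OF assms, where a = "j + 2" and b = j] by simp
  then show ?thesis by (simp add: fun_eq_iff)
qed

lemma Sop_Sop_Sop_shift:
  assumes rq: "r \<notin> \<rat>" and v: "deg_bounded D v"
  shows "Sop r (j + 4) (Sop r (j + 2 - k) (Sop r (j + k) v)) =
         Sop r (j + 4 - k) (Sop r (j + k + 2) (Sop r j v))"
proof -
  have outer: "Sop r (j + 4) (Sop r (j + 2 - k) (Sop r (j + k) v)) =
      (\<lambda>x. - Sop r (j + 4 - k) (Sop r (j + 2) (Sop r (j + k) v)) x)"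
    using Sop_Sop_anticommute[OF rq deg_bounded_Sop[OF v], where a = "j + 4" and b = "j + 2 - k"]
    by (simp add: algebra_simps)
  have inner: "Sop r (j + 2) (Sop r (j + k) v) = (\<lambda>x. - Sop r (j + k + 2) (Sop r j v) x)"
    using Sop_Sop_anticommute[OF rq v, where a = "j + 2" and b = "j + k"] by simp
  have bound: "deg_bounded (D - j - (j + k + 2)) (Sop r (j + k + 2) (Sop r j v))"
    by (intro deg_bounded_Sop v)
  show ?thesis
    unfolding outer inner Sop_neg[OF bound] by simp
qed

lemma Sigma_op_W_op:
  assumes rq: "r \<notin> \<rat>" and v: "deg_bounded D v"
  shows "Sigma_op r m (n - 4) (W_op r m n v) = W_op r m (n - 2) (Sigma_op r m n v)"
proof -
  define j where "j = m - n + 1"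
  define K where "K = nat (\<bar>D\<bar> + 2 * \<bar>j\<bar> + 1)"
  have vj: "deg_bounded (D - j) (Sop r j v)" by (rule deg_bounded_Sop[OF v])
  have K1: "D - (m - n + 1) < int K" and K2: "D - j - (m - (n - 2) + 1) < int K"
    unfolding K_def j_def by (simp_all, arith+)
  have W1: "W_op r m n v =
      (\<lambda>x. \<Sum>k\<in>{1..K}. Fcoef r n k * Sop r (j + 2 - int k) (Sop r (j + int k) v) x)"
    unfolding W_op_eq_finite_sum[OF v K1] j_def by (simp add: algebra_simps)
  have W2: "W_op r m (n - 2) (Sop r j v) =
      (\<lambda>x. \<Sum>k\<in>{1..K}. Fcoef r n k * Sop r (j + 4 - int k) (Sop r (j + int k + 2) (Sop r j v)) x)"
    unfolding W_op_eq_finite_sum[OF vj K2] Fcoef_minus_2 by (simp add: j_def algebra_simps)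
  have terms: "deg_bounded (D - j - 2 - j) (Sop r (j + 2 - int k) (Sop r (j + int k) v))" for k
    using deg_bounded_Sop[OF deg_bounded_Sop[OF v, of "j + int k"], of "j + 2 - int k"]
    by (simp add: algebra_simps)
  have "Sigma_op r m (n - 4) = Sop r (j + 4)" and "Sigma_op r m n = Sop r j"
    unfolding Sigma_op_def j_def by (simp_all add: algebra_simps)
  note Sigma_op = this
  show ?thesis
    unfolding Sigma_op W1 W2 Sop_sum_scale[OF terms] Sop_Sop_Sop_shift[OF rq v] by simp
qed

theorem mainTheorem3:
  fixes r :: real and m n :: int
  assumes generic: "r \<notin> \<rat>"
  shows "\<forall>v\<in>Fock (amn r m n).
           Sigma_op r m (n - 2) (Sigma_op r m n v) = (\<lambda>_. 0) \<and>
           Sigma_op r m (n - 4) (W_op r m n v) = W_op r m (n - 2) (Sigma_op r m n v)"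
proof
  fix v assume "v \<in> Fock (amn r m n)"
  then obtain D where v: "deg_bounded D v" using Fock_deg_bounded by blast
  have "Sigma_op r m (n - 2) (Sigma_op r m n v) = (\<lambda>_. 0)"
    using Sop_square_zero[OF generic v, where j = "m - n + 1"]
    unfolding Sigma_op_def by (simp add: algebra_simps)
  then show "Sigma_op r m (n - 2) (Sigma_op r m n v) = (\<lambda>_. 0) \<and>
        Sigma_op r m (n - 4) (W_op r m n v) = W_op r m (n - 2) (Sigma_op r m n v)"
    using Sigma_op_W_op[OF generic v] by simp
qed

end
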